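(* Let $w,w'\in W^{\mathfrak p}$. Every circle of the circle diagram $\overline{C(w')}C(w)$ that has a self-intersection (i.e. contains both arcs of some linked pair of cups or of caps) is colored red.
   Context: Let $n\ge4$, $W$ the Weyl group of type $D_n$ with simple reflections $s_0,\dots,s_{n-1}$ ($s_0,s_1$ both joined to $s_2$, $s_i$ joined to $s_{i+1}$ for $i\ge2$), $W_{\mathfrak p}=\langle s_1,\dots,s_{n-1}\rangle$, $W^{\mathfrak p}$ the minimal length representatives of $W_{\mathfrak p}\backslash W$. For $w\in W^{\mathfrak p}$ let $(\alpha_1,\dots,\alpha_n)=(+,\dots,+)\cdot w$ for the right action on $\{+,-\}^n$ where $s_i$ ($i\ge1$) swaps entries $i,i+1$ and $s_0$ sends $(a_1,a_2,\dots)$ to $(-a_2,-a_1,\dots)$; set $\alpha_{-i}=-\alpha_i$. Label $P=\{-2n,\dots,-1,1,\dots,2n\}$ by $+$ at $j<-n$, $-$ at $j>n$, $\alpha_j$ at $1\le|j|\le n$. The cup diagram $C(w)$ is obtained from the unique non-crossing matching of $P$ by arcs in the lower half plane joining each $+$ to a $-$ on its right, by replacing, for the arcs $(-y_1,y_1),\dots,(-y_{2k},y_{2k})$ crossing $0$ ($y_1<\dots<y_{2k}$), each pair $(-y_{2j-1},y_{2j-1}),(-y_{2j},y_{2j})$ by the two arcs joining $-y_{2j}$ to $y_{2j-1}$ and $-y_{2j-1}$ to $y_{2j}$ (a linked pair of cups, crossing on $x=0$). The cap diagram $\overline{C(w')}$ is the reflection of $C(w')$ in the horizontal axis, with linked pairs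 of caps the reflected linked pairs. The circle diagram $\overline{C(w')}C(w)$ is the union of cups and caps; it is a union of closed curves (circles). A circle meets a linked pair if it contains at least one of its arcs. Points $>n$ are upper outer points and points $<-n$ are lower outer points. Coloring of a circle: black if it passes through no outer point and the number of distinct linked pairs it meets is even; red if it passes through more than one upper outer point, or more than one lower outer point, or the number of distinct linked pairs it meets is odd; green otherwise. *)

theory Defs
  imports Main
begin

text \<open>An element of W is represented by the signed permutation of
  {-n..-1,1..n} (identity elsewhere) it induces.  The word s_i1 ... s_ik
  is sent to the composition s_i1 o ... o s_ik; then the right action on
  sign sequences is (a . w)(j) = a(w(j)), where a is extended oddly
  (a(-j) = -a(j)).\<close>

definition gen :: "nat \<Rightarrow> nat \<Rightarrow> int \<Rightarrow> int" where
  "gen n i = (if i = 0 then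
      (\<lambda>j. if j = 1 then -2 else if j = 2 then -1 else if j = -1 then 2
           else if j = -2 then 1 else j)
    else
      (\<lambda>j. if j = int i then int i + 1 else if j = int i + 1 then int i
           else if j = - int i then - int i - 1 else if j = - int i - 1 then - int i
           else j))"

definition word_eval :: "nat \<Rightarrow> nat list \<Rightarrow> int \<Rightarrow> int" where
  "word_eval n ws = foldr (\<lambda>i f. gen n i \<circ> f) ws id"

definition weylD :: "nat \<Rightarrow> (int \<Rightarrow> int) set" where
  "weylD n = {word_eval n ws | ws. set ws \<subseteq> {0..<n}}"

definition weylD_p :: "nat \<Rightarrow> (int \<Rightarrow> int) set" where
  "weylD_p n = {word_eval n ws | ws. set ws \<subseteq> {1..<n}}"

definition wlen :: "nat \<Rightarrow> (int \<Rightarrow> int) \<Rightarrow> nat" where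
  "wlen n w = (LEAST k. \<exists>ws. set ws \<subseteq> {0..<n} \<and> length ws = k \<and> word_eval n ws = w)"

definition minreps :: "nat \<Rightarrow> (int \<Rightarrow> int) set" where
  "minreps n = {w \<in> weylD n. \<forall>u \<in> weylD_p n. wlen n w \<le> wlen n (u \<circ> w)}"

definition points :: "nat \<Rightarrow> int set" where
  "points n = {- 2 * int n .. 2 * int n} - {0}"

text \<open>True means +, False means -.  alpha_j = sign of w(j) for 1 <= |j| <= n.\<close>
definition label :: "nat \<Rightarrow> (int \<Rightarrow> int) \<Rightarrow> int \<Rightarrow> bool" where
  "label n w j = (if j < - int n then True else if j > int n then False else 0 < w j)"

definition nc_matching :: "int set \<Rightarrow> (int \<Rightarrow> bool) \<Rightarrow> (int \<times> int) set \<Rightarrow> bool" where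
  "nc_matching P lab M \<longleftrightarrow>
     M \<subseteq> {(x, y). x \<in> P \<and> y \<in> P \<and> x < y \<and> lab x \<and> \<not> lab y} \<and>
     (\<forall>p \<in> P. \<exists>!e. e \<in> M \<and> (fst e = p \<or> snd e = p)) \<and>
     (\<forall>(a, b) \<in> M. \<forall>(c, d) \<in> M. \<not> (a < c \<and> c < b \<and> b < d))"

definition matching :: "nat \<Rightarrow> (int \<Rightarrow> int) \<Rightarrow> (int \<times> int) set" where
  "matching n w = (THE M. nc_matching (points n) (label n w) M)"

definition cross_list :: "nat \<Rightarrow> (int \<Rightarrow> int) \<Rightarrow> int list" where
  "cross_list n w = sorted_list_of_set {y. 0 < y \<and> (- y, y) \<in> matching n w}"

definition npairs :: "nat \<Rightarrow> (int \<Rightarrow> int) \<Rightarrow> nat" where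
  "npairs n w = length (cross_list n w) div 2"

text \<open>Arcs (as unordered pairs of endpoints) of the cup diagram C(w).\<close>
definition cup_arcs :: "nat \<Rightarrow> (int \<Rightarrow> int) \<Rightarrow> int set set" where
  "cup_arcs n w =
    (let Y = cross_list n w; k = npairs n w in
     {{a, b} | a b. (a, b) \<in> matching n w \<and> (a, b) \<notin> {(- (Y ! i), Y ! i) | i. i < 2 * k}}
     \<union> {{- (Y ! (2 * j + 1)), Y ! (2 * j)} | j. j < k}
     \<union> {{- (Y ! (2 * j)), Y ! (2 * j + 1)} | j. j < k})"

definition cup_linked :: "nat \<Rightarrow> (int \<Rightarrow> int) \<Rightarrow> int set set set" where
  "cup_linked n w =
    (let Y = cross_list n w in
     {{{- (Y ! (2 * j + 1)), Y ! (2 * j)}, {- (Y ! (2 * j)), Y ! (2 * j + 1)}} | j. j < npairs n w})"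

text \<open>Cups come from C(w), caps (reflected cups) from C(w'); the reflection
  does not change endpoints.  Circles = connected components.\<close>
definition circ_adj :: "nat \<Rightarrow> (int \<Rightarrow> int) \<Rightarrow> (int \<Rightarrow> int) \<Rightarrow> (int \<times> int) set" where
  "circ_adj n w w' = {(x, y). {x, y} \<in> cup_arcs n w \<or> {x, y} \<in> cup_arcs n w'}"

definition circles :: "nat \<Rightarrow> (int \<Rightarrow> int) \<Rightarrow> (int \<Rightarrow> int) \<Rightarrow> int set set" where
  "circles n w w' = {(circ_adj n w w')\<^sup>* `` {p} | p. p \<in> points n}"

text \<open>A circle Z (set of its points) contains an arc iff both endpoints lie in Z.\<close>
definition meets :: "int set \<Rightarrow> int set set \<Rightarrow> bool" where
  "meets Z L \<longleftrightarrow> (\<exists>A \<in> L. A \<subseteq> Z)"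

definition self_intersecting :: "nat \<Rightarrow> (int \<Rightarrow> int) \<Rightarrow> (int \<Rightarrow> int) \<Rightarrow> int set \<Rightarrow> bool" where
  "self_intersecting n w w' Z \<longleftrightarrow>
     (\<exists>L \<in> cup_linked n w \<union> cup_linked n w'. \<forall>A \<in> L. A \<subseteq> Z)"

definition n_linked_met :: "nat \<Rightarrow> (int \<Rightarrow> int) \<Rightarrow> (int \<Rightarrow> int) \<Rightarrow> int set \<Rightarrow> nat" where
  "n_linked_met n w w' Z =
     card {L \<in> cup_linked n w. meets Z L} + card {L \<in> cup_linked n w'. meets Z L}"

definition is_red :: "nat \<Rightarrow> (int \<Rightarrow> int) \<Rightarrow> (int \<Rightarrow> int) \<Rightarrow> int set \<Rightarrow> bool" where
  "is_red n w w' Z \<longleftrightarrow>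
     1 < card {j \<in> Z. int n < j} \<or> 1 < card {j \<in> Z. j < - int n} \<or>
     odd (n_linked_met n w w' Z)"

end

theory Submission
  imports Defs
begin

text \<open>Both cup diagrams are perfect matchings of the points that are invariant under \<open>x \<mapsto> -x\<close> and
  never join \<open>x\<close> to \<open>-x\<close>; their arcs crossing \<open>0\<close> are exactly the arcs of linked pairs, and
  a linked pair consists of an arc and its mirror image. A circle is the orbit of a point under
  the walk that alternately applies the cup partner and the cap partner. A self-intersecting
  circle contains some \<open>p\<close> and \<open>-p\<close>; the walk from \<open>p\<close> first reaches \<open>-p\<close> after an even
  number \<open>K\<close> of steps and from then on retraces its first half negated, so the circle has \<open>2K\<close>
  arcs and is closed under negation. The sign flips between \<open>p\<close> and \<open>-p\<close>, so an odd number of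
  the first \<open>K\<close> arcs cross \<open>0\<close>, and the circle contains twice an odd number of crossing arcs.
  These come in whole linked pairs, hence the circle meets an odd number of linked pairs.\<close>

lemma gen_uminus: "gen n i (- j) = - gen n i j"
  unfolding gen_def by auto

lemma gen_nonzero: "j \<noteq> 0 \<Longrightarrow> gen n i j \<noteq> 0"
  unfolding gen_def by auto

lemma word_eval_uminus: "word_eval n ws (- j) = - word_eval n ws j"
  by (induction ws arbitrary: j) (auto simp: word_eval_def gen_uminus)

lemma word_eval_nonzero: "j \<noteq> 0 \<Longrightarrow> word_eval n ws j \<noteq> 0"
  by (induction ws arbitrary: j) (auto simp: word_eval_def gen_nonzero)

lemma weylD_uminus: "w \<in> weylD n \<Longrightarrow> w (- j) = - w j"
  unfolding weylD_def using word_eval_uminus by blast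

lemma weylD_nonzero: "w \<in> weylD n \<Longrightarrow> j \<noteq> 0 \<Longrightarrow> w j \<noteq> 0"
  unfolding weylD_def using word_eval_nonzero by blast

section \<open>Perfect matchings\<close>

definition perfect_matching :: "'a set \<Rightarrow> 'a set set \<Rightarrow> bool" where
  "perfect_matching P S \<longleftrightarrow> (\<forall>A\<in>S. card A = 2 \<and> A \<subseteq> P) \<and> (\<forall>p\<in>P. \<exists>!A\<in>S. p \<in> A)"

definition partner :: "'a set set \<Rightarrow> 'a \<Rightarrow> 'a" where
  "partner S x = (THE y. {x, y} \<in> S \<and> y \<noteq> x)"

lemma perfect_matchingD:
  assumes "perfect_matching P S" "A \<in> S"
  shows "card A = 2" "A \<subseteq> P"
  using assms unfolding perfect_matching_def by auto

lemma perfect_matching_unique: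
  assumes "perfect_matching P S" "A \<in> S" "B \<in> S" "p \<in> A" "p \<in> B"
  shows "A = B"
proof -
  have "p \<in> P" using perfect_matchingD(2)[OF assms(1,2)] assms(4) by blast
  then have "\<exists>!A. A \<in> S \<and> p \<in> A" using assms(1) unfolding perfect_matching_def by simp
  then show ?thesis using assms(2-5) by blast
qed

lemma perfect_matchingI:
  assumes "\<And>A. A \<in> S \<Longrightarrow> card A = 2" "\<And>A. A \<in> S \<Longrightarrow> A \<subseteq> P"
    and "\<And>p. p \<in> P \<Longrightarrow> \<exists>A\<in>S. p \<in> A"
    and "\<And>A B p. A \<in> S \<Longrightarrow> B \<in> S \<Longrightarrow> p \<in> A \<Longrightarrow> p \<in> B \<Longrightarrow> A = B"
  shows "perfect_matching P S"
  unfolding perfect_matching_def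
proof (intro conjI ballI)
  fix p assume "p \<in> P"
  then obtain A where "A \<in> S" "p \<in> A" using assms(3) by blast
  then show "\<exists>!A. A \<in> S \<and> p \<in> A" using assms(4) by (intro ex1I[of _ A]) auto
qed (use assms(1,2) in auto)

lemma perfect_matching_cover:
  assumes "perfect_matching P S" "p \<in> P"
  shows "\<exists>A\<in>S. p \<in> A"
  using assms unfolding perfect_matching_def by auto

lemma perfect_matching_Un:
  assumes disj: "P \<inter> Q = {}" and S: "perfect_matching P S" and T: "perfect_matching Q T"
  shows "perfect_matching (P \<union> Q) (S \<union> T)"
proof (rule perfect_matchingI)
  fix A assume "A \<in> S \<union> T"
  then show "card A = 2" "A \<subseteq> P \<union> Q"
    using perfect_matchingD[OF S, of A] perfect_matchingD[OF T, of A] by auto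
next
  fix p assume "p \<in> P \<union> Q"
  then show "\<exists>A\<in>S \<union> T. p \<in> A"
    using perfect_matching_cover[OF S] perfect_matching_cover[OF T] by auto
next
  fix A B p assume AB: "A \<in> S \<union> T" "B \<in> S \<union> T" and p: "p \<in> A" "p \<in> B"
  have "A \<in> S \<longleftrightarrow> B \<in> S"
    using AB p disj perfect_matchingD(2)[OF S, of A] perfect_matchingD(2)[OF S, of B]
      perfect_matchingD(2)[OF T, of A] perfect_matchingD(2)[OF T, of B] by blast
  then show "A = B"
    using AB p perfect_matching_unique[OF S, of A B p] perfect_matching_unique[OF T, of A B p]
    by blast
qed

lemma perfect_matching_subset:
  assumes S: "perfect_matching P S" and "S' \<subseteq> S"
  shows "perfect_matching (\<Union>S') S'"
proof (rule perfect_matchingI)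
  show "A = B" if "A \<in> S'" "B \<in> S'" "p \<in> A" "p \<in> B" for A B p
    using that assms(2) perfect_matching_unique[OF S, of A B p] by blast
qed (use assms(2) perfect_matchingD[OF S] in auto)

lemma perfect_matching_card:
  assumes "finite P" "perfect_matching P S"
  shows "card P = 2 * card S"
proof -
  have P: "P = \<Union>S"
    using assms(2) unfolding perfect_matching_def by blast
  have "finite S"
    using assms P by (simp add: finite_UnionD)
  have "pairwise disjnt S"
    using perfect_matching_unique[OF assms(2)] unfolding pairwise_def disjnt_def by blast
  moreover have "finite A" if "A \<in> S" for A
    using perfect_matchingD(1)[OF assms(2) that] by (simp add: card_ge_0_finite)
  ultimately have "card P = sum card S"
    unfolding P by (rule card_Union_disjoint)
  also have "\<dots> = 2 * card S"
    using perfect_matchingD(1)[OF assms(2)] by simp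
  finally show ?thesis .
qed

lemma perfect_matching_partner:
  assumes pm: "perfect_matching P S" and p: "p \<in> P"
  shows "{p, partner S p} \<in> S" "partner S p \<noteq> p" "partner S p \<in> P"
proof -
  have "\<exists>!A. A \<in> S \<and> p \<in> A"
    using pm p unfolding perfect_matching_def by simp
  then obtain A where A: "A \<in> S" "p \<in> A" and uniq: "\<And>B. B \<in> S \<Longrightarrow> p \<in> B \<Longrightarrow> B = A"
    by (elim ex1E) blast
  obtain x y where xy: "A = {x, y}" "x \<noteq> y"
    using card_2_iff[THEN iffD1, OF perfect_matchingD(1)[OF pm A(1)]] by blast
  define q where "q = (if p = x then y else x)"
  have q: "A = {p, q}" "q \<noteq> p"
    using xy A(2) unfolding q_def by auto
  have "partner S p = q"
    unfolding partner_def
  proof (rule the_equality)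
    show "{p, q} \<in> S \<and> q \<noteq> p" using A q by simp
    show "q' = q" if "{p, q'} \<in> S \<and> q' \<noteq> p" for q'
      using uniq[of "{p, q'}"] that q by auto
  qed
  then show "{p, partner S p} \<in> S" "partner S p \<noteq> p" "partner S p \<in> P"
    using A q perfect_matchingD(2)[OF pm A(1)] by auto
qed

lemma perfect_matching_eq_partner:
  assumes pm: "perfect_matching P S" and "A \<in> S" "x \<in> A"
  shows "A = {x, partner S x}"
proof -
  have x: "x \<in> P" using perfect_matchingD(2)[OF pm assms(2)] assms(3) by blast
  show ?thesis
    using perfect_matching_unique[OF pm assms(2) perfect_matching_partner(1)[OF pm x]] assms(3) by simp
qed

lemma perfect_matching_pair_iff:
  assumes pm: "perfect_matching P S"
  shows "{x, y} \<in> S \<longleftrightarrow> x \<in> P \<and> y = partner S x"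
proof
  assume xy: "{x, y} \<in> S"
  have "x \<noteq> y" using perfect_matchingD(1)[OF pm xy] by (cases "x = y") simp_all
  moreover have "{x, y} = {x, partner S x}" using perfect_matching_eq_partner[OF pm xy] by simp
  ultimately have "y = partner S x" by (auto simp: doubleton_eq_iff)
  then show "x \<in> P \<and> y = partner S x"
    using perfect_matchingD(2)[OF pm xy] by simp
qed (use perfect_matching_partner(1)[OF pm] in auto)

lemma partner_partner:
  assumes pm: "perfect_matching P S" and p: "p \<in> P"
  shows "partner S (partner S p) = p"
proof -
  have "{partner S p, p} \<in> S"
    using perfect_matching_partner(1)[OF pm p] by (simp add: insert_commute)
  then show ?thesis
    using perfect_matching_pair_iff[OF pm] by simp
qed

lemma partner_uminus:
  fixes P :: "'a::group_add set"
  assumes pm: "perfect_matching P S" and p: "p \<in> P"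
    and S_uminus: "\<And>A. A \<in> S \<Longrightarrow> uminus ` A \<in> S"
  shows "partner S (- p) = - partner S p"
proof -
  have "{- p, - partner S p} \<in> S"
    using S_uminus[OF perfect_matching_partner(1)[OF pm p]] by simp
  then show ?thesis
    using perfect_matching_pair_iff[OF pm] by simp
qed

section \<open>Non-crossing matchings\<close>

lemma nc_matchingD:
  assumes "nc_matching P lab M" "(a, b) \<in> M"
  shows "a \<in> P" "b \<in> P" "a < b" "lab a" "\<not> lab b"
  using assms unfolding nc_matching_def by auto

lemma nc_matching_cover:
  assumes "nc_matching P lab M" "p \<in> P"
  obtains a b where "(a, b) \<in> M" "p = a \<or> p = b"
  using assms unfolding nc_matching_def by (metis prod.collapse)

lemma nc_matching_arc_unique:
  assumes nc: "nc_matching P lab M" and "(a, b) \<in> M" "(a', b') \<in> M" "p \<in> {a, b}" "p \<in> {a', b'}"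
  shows "(a, b) = (a', b')"
proof -
  have "p \<in> P" using nc_matchingD(1,2)[OF nc assms(2)] assms(4) by auto
  then have "\<exists>!e. e \<in> M \<and> (fst e = p \<or> snd e = p)"
    using nc unfolding nc_matching_def by blast
  moreover have "fst (a, b) = p \<or> snd (a, b) = p" "fst (a', b') = p \<or> snd (a', b') = p"
    using assms(4,5) by auto
  ultimately show ?thesis using assms(2,3) by blast
qed

lemma nc_matching_non_crossing:
  assumes "nc_matching P lab M" "(a, b) \<in> M" "(c, d) \<in> M"
  shows "\<not> (a < c \<and> c < b \<and> b < d)"
  using assms unfolding nc_matching_def by fast

lemma nc_matching_insert_adjacent:
  assumes nc: "nc_matching (P - {x, y}) lab M" and xy: "x \<in> P" "y \<in> P" "x < y" "lab x" "\<not> lab y"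
    and adjacent: "\<forall>p\<in>P. \<not> (x < p \<and> p < y)"
  shows "nc_matching P lab (insert (x, y) M)"
  unfolding nc_matching_def
proof (intro conjI)
  have M: "a \<in> P - {x, y}" "b \<in> P - {x, y}" if "(a, b) \<in> M" for a b
    using nc_matchingD[OF nc that] by auto
  show "insert (x, y) M \<subseteq> {(a, b). a \<in> P \<and> b \<in> P \<and> a < b \<and> lab a \<and> \<not> lab b}"
    using xy nc_matchingD[OF nc] by auto
  show "\<forall>p\<in>P. \<exists>!e. e \<in> insert (x, y) M \<and> (fst e = p \<or> snd e = p)"
  proof
    fix p assume p: "p \<in> P"
    show "\<exists>!e. e \<in> insert (x, y) M \<and> (fst e = p \<or> snd e = p)"
    proof (cases "p = x \<or> p = y")
      case True
      then show ?thesis using M by (intro ex1I[of _ "(x, y)"]) fastforce+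
    next
      case False
      obtain a b where ab: "(a, b) \<in> M" "p = a \<or> p = b"
        using nc_matching_cover[OF nc] p False by blast
      show ?thesis
      proof (rule ex1I[of _ "(a, b)"])
        show "(a, b) \<in> insert (x, y) M \<and> (fst (a, b) = p \<or> snd (a, b) = p)" using ab by auto
        fix e assume e: "e \<in> insert (x, y) M \<and> (fst e = p \<or> snd e = p)"
        then have "e \<in> M" using False by auto
        then show "e = (a, b)"
          using nc_matching_arc_unique[OF nc, of "fst e" "snd e" a b p] e ab by auto
      qed
    qed
  qed
  show "\<forall>(a, b)\<in>insert (x, y) M. \<forall>(c, d)\<in>insert (x, y) M. \<not> (a < c \<and> c < b \<and> b < d)"
    using nc_matching_non_crossing[OF nc] M adjacent by fastforce
qed

definition dyck_labelling :: "int set \<Rightarrow> (int \<Rightarrow> bool) \<Rightarrow> bool" where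
  "dyck_labelling P lab \<longleftrightarrow>
     (\<forall>t. card {p\<in>P. p \<le> t \<and> \<not> lab p} \<le> card {p\<in>P. p \<le> t \<and> lab p}) \<and>
     card {p\<in>P. lab p} = card {p\<in>P. \<not> lab p}"

lemma dyck_labelling_remove_adjacent:
  assumes fin: "finite P" and dyck: "dyck_labelling P lab"
    and xy: "x \<in> P" "y \<in> P" "x < y" "lab x" "\<not> lab y"
    and leftmost: "\<And>p. p \<in> P \<Longrightarrow> p < y \<Longrightarrow> lab p"
  shows "dyck_labelling (P - {x, y}) lab"
proof -
  have count: "card {p\<in>P. R p \<and> lab p = b} = Suc (card {p \<in> P - {x, y}. R p \<and> lab p = b})"
    if "R x" "R y" for R b
  proof -
    define Q where "Q = {p \<in> P - {x, y}. R p \<and> lab p = b}"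
    have "{p\<in>P. R p \<and> lab p = b} = insert (if b then x else y) Q"
      using xy that unfolding Q_def by auto
    moreover have "finite Q" "x \<notin> Q" "y \<notin> Q" using fin unfolding Q_def by auto
    ultimately show ?thesis unfolding Q_def[symmetric] by simp
  qed
  have bound: "card {p\<in>P. p \<le> t \<and> lab p = False} \<le> card {p\<in>P. p \<le> t \<and> lab p = True}" for t
    using dyck unfolding dyck_labelling_def by simp
  have "card {p \<in> P - {x, y}. p \<le> t \<and> lab p = False} \<le> card {p \<in> P - {x, y}. p \<le> t \<and> lab p = True}" for t
  proof (cases "t < y")
    case True
    then have "{p \<in> P - {x, y}. p \<le> t \<and> lab p = False} = {}" using leftmost by fastforce
    then show ?thesis by (simp only: card.empty le0)
  next
    case False
    then show ?thesis
      using bound[of t] count[of "\<lambda>p. p \<le> t" True] count[of "\<lambda>p. p \<le> t" False] xy(3) by simp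
  qed
  moreover have "card {p \<in> P - {x, y}. True \<and> lab p = True} = card {p \<in> P - {x, y}. True \<and> lab p = False}"
    using dyck count[of "\<lambda>_. True" True] count[of "\<lambda>_. True" False]
    unfolding dyck_labelling_def by simp
  ultimately show ?thesis unfolding dyck_labelling_def by simp
qed

lemma leftmost_minus:
  fixes P :: "'a::linorder set"
  assumes "finite P" "{p\<in>P. \<not> lab p} \<noteq> {}"
  obtains y where "y \<in> P" "\<not> lab y" "\<And>p. p \<in> P \<Longrightarrow> p < y \<Longrightarrow> lab p"
proof
  let ?y = "Min {p\<in>P. \<not> lab p}"
  show "?y \<in> P" "\<not> lab ?y" using Min_in[OF _ assms(2)] assms(1) by auto
  show "lab p" if "p \<in> P" "p < ?y" for p
  proof (rule ccontr)
    assume "\<not> lab p"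
    then have "?y \<le> p" using Min_le[of "{p\<in>P. \<not> lab p}" p] that(1) assms(1) by simp
    then show False using that(2) by simp
  qed
qed

text \<open>By the ballot condition some \<open>+\<close> precedes the leftmost \<open>-\<close>; as everything before that
  \<open>-\<close> is a \<open>+\<close>, so is the point immediately before it.\<close>
lemma dyck_labelling_adjacent_pair:
  assumes fin: "finite P" and dyck: "dyck_labelling P lab" and minus: "{p\<in>P. \<not> lab p} \<noteq> {}"
  obtains x y where "x \<in> P" "y \<in> P" "x < y" "lab x" "\<not> lab y"
    "\<And>p. p \<in> P \<Longrightarrow> p < y \<Longrightarrow> lab p" "\<forall>p\<in>P. \<not> (x < p \<and> p < y)"
proof -
  obtain y where y: "y \<in> P" "\<not> lab y" and leftmost: "\<And>p. p \<in> P \<Longrightarrow> p < y \<Longrightarrow> lab p"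
    using leftmost_minus[OF fin minus] by blast
  have "y \<in> {p\<in>P. p \<le> y \<and> \<not> lab p}" using y by simp
  then have "0 < card {p\<in>P. p \<le> y \<and> \<not> lab p}"
    using fin by (auto simp: card_gt_0_iff)
  moreover have "card {p\<in>P. p \<le> y \<and> \<not> lab p} \<le> card {p\<in>P. p \<le> y \<and> lab p}"
    using dyck unfolding dyck_labelling_def by blast
  ultimately have "card {p\<in>P. p \<le> y \<and> lab p} \<noteq> 0" by linarith
  then have "{p\<in>P. p \<le> y \<and> lab p} \<noteq> {}" by (metis card.empty)
  then obtain x0 where "x0 \<in> P" "x0 \<le> y" "lab x0" by blast
  then have below: "{p\<in>P. p < y} \<noteq> {}"
    using y(2) by (cases "x0 = y") auto
  define x where "x = Max {p\<in>P. p < y}"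
  have x: "x \<in> P" "x < y" using Max_in[OF _ below] fin x_def by auto
  have "\<forall>p\<in>P. \<not> (x < p \<and> p < y)"
  proof (intro ballI notI)
    fix p assume p: "p \<in> P" "x < p \<and> p < y"
    then have "p \<le> x" using Max_ge[of "{p\<in>P. p < y}" p] fin x_def by simp
    then show False using p by simp
  qed
  then show ?thesis using that x y leftmost[OF x] leftmost by blast
qed

lemma nc_matching_exists:
  assumes "finite P" "dyck_labelling P lab"
  shows "\<exists>M. nc_matching P lab M"
  using assms
proof (induction "card P" arbitrary: P rule: less_induct)
  case less
  show ?case
  proof (cases "{p\<in>P. \<not> lab p} = {}")
    case True
    then have "card {p\<in>P. \<not> lab p} = 0" by (simp only: card.empty)
    then have "card {p\<in>P. lab p} = 0"
      using less.prems(2) unfolding dyck_labelling_def by simp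
    then have "{p\<in>P. lab p} = {}" using less.prems(1) by simp
    with True have "P = {}" by blast
    then show ?thesis by (auto simp: nc_matching_def intro!: exI[of _ "{}"])
  next
    case False
    obtain x y where xy: "x \<in> P" "y \<in> P" "x < y" "lab x" "\<not> lab y"
      and leftmost: "\<And>p. p \<in> P \<Longrightarrow> p < y \<Longrightarrow> lab p" and adjacent: "\<forall>p\<in>P. \<not> (x < p \<and> p < y)"
      using dyck_labelling_adjacent_pair[OF less.prems False] by blast
    have "card (P - {x, y}) < card P"
      using xy less.prems(1) by (intro psubset_card_mono) auto
    moreover have "dyck_labelling (P - {x, y}) lab"
      using dyck_labelling_remove_adjacent[OF less.prems xy leftmost] .
    ultimately obtain M where "nc_matching (P - {x, y}) lab M"
      using less.hyps less.prems(1) by blast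
    then show ?thesis
      using nc_matching_insert_adjacent xy adjacent by blast
  qed
qed

lemma nc_matching_remove_arc:
  assumes nc: "nc_matching P lab M" and xy: "(x, y) \<in> M"
  shows "nc_matching (P - {x, y}) lab (M - {(x, y)})"
  unfolding nc_matching_def
proof (intro conjI)
  have other: "a \<notin> {x, y}" "b \<notin> {x, y}" if "(a, b) \<in> M" "(a, b) \<noteq> (x, y)" for a b
    using nc_matching_arc_unique[OF nc that(1) xy] that by blast+
  show "M - {(x, y)} \<subseteq> {(a, b). a \<in> P - {x, y} \<and> b \<in> P - {x, y} \<and> a < b \<and> lab a \<and> \<not> lab b}"
    using other nc_matchingD[OF nc] by auto
  show "\<forall>p\<in>P - {x, y}. \<exists>!e. e \<in> M - {(x, y)} \<and> (fst e = p \<or> snd e = p)"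
  proof
    fix p assume p: "p \<in> P - {x, y}"
    obtain a b where ab: "(a, b) \<in> M" "p = a \<or> p = b" using nc_matching_cover[OF nc] p by blast
    show "\<exists>!e. e \<in> M - {(x, y)} \<and> (fst e = p \<or> snd e = p)"
    proof (rule ex1I[of _ "(a, b)"])
      show "(a, b) \<in> M - {(x, y)} \<and> (fst (a, b) = p \<or> snd (a, b) = p)" using ab p by auto
      fix e assume "e \<in> M - {(x, y)} \<and> (fst e = p \<or> snd e = p)"
      then show "e = (a, b)"
        using nc_matching_arc_unique[OF nc, of "fst e" "snd e" a b p] ab by auto
    qed
  qed
  show "\<forall>(a, b)\<in>M - {(x, y)}. \<forall>(c, d)\<in>M - {(x, y)}. \<not> (a < c \<and> c < b \<and> b < d)"
    using nc_matching_non_crossing[OF nc] by blast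
qed

lemma nc_matching_leftmost_minus:
  assumes nc: "nc_matching P lab M" and y: "y \<in> P" "\<not> lab y"
    and leftmost: "\<And>p. p \<in> P \<Longrightarrow> p < y \<Longrightarrow> lab p"
  obtains x where "(x, y) \<in> M" "x < y" "\<forall>p\<in>P. \<not> (x < p \<and> p < y)"
proof -
  obtain x where xy: "(x, y) \<in> M"
    using nc_matching_cover[OF nc y(1)] nc_matchingD(4)[OF nc] y(2) by metis
  have "\<not> (x < p \<and> p < y)" if p: "p \<in> P" for p
  proof
    assume between: "x < p \<and> p < y"
    obtain a b where ab: "(a, b) \<in> M" "p = a \<or> p = b" using nc_matching_cover[OF nc p] by blast
    have "p = a" using ab nc_matchingD(5)[OF nc ab(1)] leftmost p between by auto
    then have "b \<noteq> y" using nc_matching_arc_unique[OF nc ab(1) xy, of y] between by auto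
    moreover have "\<not> b < y" using nc_matchingD[OF nc ab(1)] leftmost by auto
    ultimately show False
      using nc_matching_non_crossing[OF nc xy ab(1)] between \<open>p = a\<close> by auto
  qed
  then show ?thesis using that xy nc_matchingD(3)[OF nc xy] by blast
qed

lemma nc_matching_unique:
  assumes "finite P" "nc_matching P lab M1" "nc_matching P lab M2"
  shows "M1 = M2"
  using assms
proof (induction "card P" arbitrary: P M1 M2 rule: less_induct)
  case less
  show ?case
  proof (cases "{p\<in>P. \<not> lab p} = {}")
    case True
    have "M = {}" if "nc_matching P lab M" for M
      using nc_matchingD(2,5)[OF that] True by auto
    then show ?thesis using less.prems(2,3) by metis
  next
    case False
    obtain y where y: "y \<in> P" "\<not> lab y" and leftmost: "\<And>p. p \<in> P \<Longrightarrow> p < y \<Longrightarrow> lab p"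
      using leftmost_minus[OF less.prems(1) False] by blast
    obtain x1 where x1: "(x1, y) \<in> M1" "x1 < y" "\<forall>p\<in>P. \<not> (x1 < p \<and> p < y)"
      using nc_matching_leftmost_minus[OF less.prems(2) y leftmost] by blast
    obtain x2 where x2: "(x2, y) \<in> M2" "x2 < y" "\<forall>p\<in>P. \<not> (x2 < p \<and> p < y)"
      using nc_matching_leftmost_minus[OF less.prems(3) y leftmost] by blast
    have "x1 = x2"
      using x1 x2 nc_matchingD(1)[OF less.prems(2) x1(1)] nc_matchingD(1)[OF less.prems(3) x2(1)]
      by (meson linorder_neqE)
    then have x2': "(x1, y) \<in> M2" using x2 by simp
    have "card (P - {x1, y}) < card P"
      using x1 y less.prems(1) nc_matchingD(1)[OF less.prems(2) x1(1)] by (intro psubset_card_mono) auto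
    then have "M1 - {(x1, y)} = M2 - {(x1, y)}"
      using less.hyps less.prems(1) nc_matching_remove_arc[OF less.prems(2) x1(1)]
        nc_matching_remove_arc[OF less.prems(3) x2'] by blast
    then show ?thesis using x1(1) x2' by (metis insert_Diff)
  qed
qed

lemma nc_matching_perfect_matching:
  assumes nc: "nc_matching P lab M"
  shows "perfect_matching P ({{a, b} | a b. (a, b) \<in> M})"
proof (rule perfect_matchingI)
  fix A assume "A \<in> {{a, b} | a b. (a, b) \<in> M}"
  then obtain a b where "A = {a, b}" "(a, b) \<in> M" by blast
  then show "card A = 2" "A \<subseteq> P" using nc_matchingD[OF nc, of a b] by auto
next
  fix p assume "p \<in> P"
  then obtain a b where "(a, b) \<in> M" "p = a \<or> p = b" by (rule nc_matching_cover[OF nc])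
  then show "\<exists>A\<in>{{a, b} | a b. (a, b) \<in> M}. p \<in> A" by (intro bexI[of _ "{a, b}"]) auto
next
  fix A B p assume "A \<in> {{a, b} | a b. (a, b) \<in> M}" "B \<in> {{a, b} | a b. (a, b) \<in> M}" and p: "p \<in> A" "p \<in> B"
  then obtain a b a' b' where "A = {a, b}" "(a, b) \<in> M" "B = {a', b'}" "(a', b') \<in> M" by blast
  then show "A = B" using nc_matching_arc_unique[OF nc, of a b a' b' p] p by simp
qed

lemma nc_matching_mirror:
  assumes nc: "nc_matching P lab M"
    and uminus_in_P: "\<And>x. x \<in> P \<Longrightarrow> - x \<in> P" and lab_uminus: "\<And>x. x \<in> P \<Longrightarrow> lab (- x) = (\<not> lab x)"
  shows "nc_matching P lab {(- b, - a :: int) | a b. (a, b) \<in> M}"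
  unfolding nc_matching_def
proof (intro conjI)
  let ?M' = "{(- b, - a :: int) | a b. (a, b) \<in> M}"
  have mirror_iff: "(x, y) \<in> ?M' \<longleftrightarrow> (- y, - x) \<in> M" for x y
    by force
  show "?M' \<subseteq> {(a, b). a \<in> P \<and> b \<in> P \<and> a < b \<and> lab a \<and> \<not> lab b}"
    using nc_matchingD[OF nc] uminus_in_P lab_uminus by auto
  show "\<forall>p\<in>P. \<exists>!e. e \<in> ?M' \<and> (fst e = p \<or> snd e = p)"
  proof
    fix p assume p: "p \<in> P"
    obtain a b where ab: "(a, b) \<in> M" "- p = a \<or> - p = b"
      using nc_matching_cover[OF nc uminus_in_P[OF p]] by blast
    show "\<exists>!e. e \<in> ?M' \<and> (fst e = p \<or> snd e = p)"
    proof (rule ex1I[of _ "(- b, - a)"])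
      show "(- b, - a) \<in> ?M' \<and> (fst (- b, - a) = p \<or> snd (- b, - a) = p)"
        using ab by auto
      fix e assume e: "e \<in> ?M' \<and> (fst e = p \<or> snd e = p)"
      obtain x y where xy: "e = (x, y)" by (cases e)
      then have "(- y, - x) \<in> M" using e mirror_iff by simp
      then have "(- y, - x) = (a, b)"
        using nc_matching_arc_unique[OF nc _ ab(1), of _ _ "- p"] e ab(2) xy by auto
      then show "e = (- b, - a)" using xy by auto
    qed
  qed
  have "\<not> (a < c \<and> c < b \<and> b < d)" if "(a, b) \<in> ?M'" "(c, d) \<in> ?M'" for a b c d
    using nc_matching_non_crossing[OF nc, of "- d" "- c" "- b" "- a"] that mirror_iff by auto
  then show "\<forall>(a, b)\<in>?M'. \<forall>(c, d)\<in>?M'. \<not> (a < c \<and> c < b \<and> b < d)"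
    by fast
qed

locale symmetric_nc_matching =
  fixes P :: "int set" and lab :: "int \<Rightarrow> bool" and M :: "(int \<times> int) set"
  assumes finite_P: "finite P" and nc: "nc_matching P lab M"
    and uminus_in_P: "\<And>x. x \<in> P \<Longrightarrow> - x \<in> P"
    and lab_uminus: "\<And>x. x \<in> P \<Longrightarrow> lab (- x) = (\<not> lab x)"
begin

lemma zero_notin_P: "0 \<notin> P"
  using lab_uminus[of 0] by auto

lemma mirror_arc:
  assumes "(a, b) \<in> M"
  shows "(- b, - a) \<in> M"
proof -
  have "{(- b, - a) | a b. (a, b) \<in> M} = M"
    using nc_matching_unique[OF finite_P nc_matching_mirror[OF nc uminus_in_P lab_uminus] nc] .
  then show ?thesis using assms by blast
qed

lemma crossing_arc_antipodal:
  assumes ab: "(a, b) \<in> M" and "a < 0" "0 < b"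
  shows "a = - b"
proof (rule ccontr)
  assume "a \<noteq> - b"
  then consider "a < - b" | "- b < a" by linarith
  then show False
  proof cases
    case 1
    then show False using nc_matching_non_crossing[OF nc ab mirror_arc[OF ab]] assms(2,3) by auto
  next
    case 2
    then show False using nc_matching_non_crossing[OF nc mirror_arc[OF ab] ab] assms(2,3) by auto
  qed
qed

definition crossing_points :: "int set" where
  "crossing_points = {y. 0 < y \<and> (- y, y) \<in> M}"

lemma crossing_points_subset: "crossing_points \<subseteq> {p\<in>P. 0 < p}"
  unfolding crossing_points_def using nc_matchingD(2)[OF nc] by blast

lemma Union_positive_arcs:
  "\<Union>{{a, b} | a b. (a, b) \<in> M \<and> 0 < a} = {p\<in>P. 0 < p} - crossing_points"
proof (intro equalityI subsetI)
  fix p assume "p \<in> \<Union>{{a, b} | a b. (a, b) \<in> M \<and> 0 < a}"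
  then obtain a b where ab: "(a, b) \<in> M" "0 < a" "p \<in> {a, b}" by blast
  have "p \<in> P" "0 < p" using nc_matchingD[OF nc ab(1)] ab by auto
  moreover have "p \<notin> crossing_points"
  proof
    assume "p \<in> crossing_points"
    then have "(- p, p) \<in> M" unfolding crossing_points_def by simp
    then have "(a, b) = (- p, p)" using nc_matching_arc_unique[OF nc ab(1) _ ab(3)] by simp
    then show False using ab(2) \<open>0 < p\<close> by simp
  qed
  ultimately show "p \<in> {p\<in>P. 0 < p} - crossing_points" by simp
next
  fix p assume p: "p \<in> {p\<in>P. 0 < p} - crossing_points"
  obtain a b where ab: "(a, b) \<in> M" "p = a \<or> p = b" using nc_matching_cover[OF nc] p by blast
  have "a \<noteq> 0" using nc_matchingD(1)[OF nc ab(1)] zero_notin_P by auto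
  moreover have "\<not> a < 0"
  proof
    assume "a < 0"
    then have "p = b" "a = - b" using ab p crossing_arc_antipodal[OF ab(1)] by auto
    then show False using p ab(1) unfolding crossing_points_def by auto
  qed
  ultimately have "0 < a" by simp
  then show "p \<in> \<Union>{{a, b} | a b. (a, b) \<in> M \<and> 0 < a}" using ab by blast
qed

lemma even_card_crossing_points:
  assumes "even (card {p\<in>P. 0 < p})"
  shows "even (card crossing_points)"
proof -
  let ?S = "{{a, b} | a b. (a, b) \<in> M \<and> 0 < a}"
  have "perfect_matching (\<Union>?S) ?S"
    by (rule perfect_matching_subset[OF nc_matching_perfect_matching[OF nc]]) blast
  then have "card ({p\<in>P. 0 < p} - crossing_points) = 2 * card ?S"
    using perfect_matching_card[of "\<Union>?S" ?S] finite_P unfolding Union_positive_arcs by simp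
  moreover have fin: "finite crossing_points"
    using crossing_points_subset finite_P by (simp add: finite_subset)
  have "card {p\<in>P. 0 < p} = card ({p\<in>P. 0 < p} - crossing_points) + card crossing_points"
    using card_Diff_subset[OF fin crossing_points_subset] card_mono[OF _ crossing_points_subset] finite_P
    by simp
  ultimately show ?thesis using assms by simp
qed
end

lemma finite_points: "finite (points n)"
  unfolding points_def by simp

lemma uminus_points: "x \<in> points n \<Longrightarrow> - x \<in> points n"
  unfolding points_def by auto

lemma label_uminus:
  assumes "w \<in> weylD n" "x \<in> points n"
  shows "label n w (- x) = (\<not> label n w x)"
  using weylD_nonzero[OF assms(1), of x] weylD_uminus[OF assms(1), of x] assms(2)
  unfolding label_def points_def by auto

lemma card_positive_points: "card {p\<in>points n. 0 < p} = 2 * n"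
proof -
  have "{p\<in>points n. 0 < p} = {1 .. 2 * int n}" unfolding points_def by auto
  then show ?thesis by simp
qed

lemma card_points_below: "card {p\<in>points n. p < - int n} = n"
proof -
  have "{p\<in>points n. p < - int n} = {- 2 * int n .. - int n - 1}" unfolding points_def by auto
  then show ?thesis by simp
qed

lemma card_points_above: "card {p\<in>points n. int n < p} = n"
proof -
  have "{p\<in>points n. int n < p} = {int n + 1 .. 2 * int n}" unfolding points_def by auto
  then show ?thesis by simp
qed

lemma card_middle_points_label:
  assumes w: "w \<in> weylD n"
  shows "card {p\<in>points n. - int n \<le> p \<and> p \<le> int n \<and> label n w p} = n"
    and "card {p\<in>points n. - int n \<le> p \<and> p \<le> int n \<and> \<not> label n w p} = n"
proof -
  define Mp where "Mp = {p\<in>points n. - int n \<le> p \<and> p \<le> int n \<and> label n w p}"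
  define Mm where "Mm = {p\<in>points n. - int n \<le> p \<and> p \<le> int n \<and> \<not> label n w p}"
  have "uminus ` Mp = Mm"
  proof (intro equalityI subsetI)
    fix x assume "x \<in> uminus ` Mp"
    then obtain y where y: "y \<in> Mp" "x = - y" by blast
    then show "x \<in> Mm"
      using label_uminus[OF w, of y] uminus_points[of y] unfolding Mp_def Mm_def by auto
  next
    fix x assume x: "x \<in> Mm"
    then have "- x \<in> Mp"
      using label_uminus[OF w, of x] uminus_points[of x] unfolding Mp_def Mm_def by auto
    then show "x \<in> uminus ` Mp" by (rule rev_image_eqI) simp
  qed
  moreover have "card (uminus ` Mp) = card Mp" by (rule card_image) (simp add: inj_on_def)
  ultimately have same: "card Mm = card Mp" by simp
  have "card (Mp \<union> Mm) = card Mp + card Mm"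
    by (rule card_Un_disjoint) (use finite_points[of n] in \<open>auto simp: Mp_def Mm_def\<close>)
  moreover have "Mp \<union> Mm = {- int n .. int n} - {0}" unfolding Mp_def Mm_def points_def by auto
  ultimately have "card Mp + card Mm = 2 * n" by simp
  then show "card Mp = n" "card Mm = n" using same by simp_all
qed

lemma card_points_label:
  assumes w: "w \<in> weylD n"
  shows "card {p\<in>points n. label n w p} = 2 * n" and "card {p\<in>points n. \<not> label n w p} = 2 * n"
proof -
  have "{p\<in>points n. label n w p} =
      {p\<in>points n. p < - int n} \<union> {p\<in>points n. - int n \<le> p \<and> p \<le> int n \<and> label n w p}"
    unfolding label_def by auto
  moreover have "card ({p\<in>points n. p < - int n} \<union> {p\<in>points n. - int n \<le> p \<and> p \<le> int n \<and> label n w p}) =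
      card {p\<in>points n. p < - int n} + card {p\<in>points n. - int n \<le> p \<and> p \<le> int n \<and> label n w p}"
    by (rule card_Un_disjoint) (use finite_points[of n] in auto)
  ultimately show "card {p\<in>points n. label n w p} = 2 * n"
    using card_points_below[of n] card_middle_points_label(1)[OF w] by simp
  have "{p\<in>points n. \<not> label n w p} =
      {p\<in>points n. int n < p} \<union> {p\<in>points n. - int n \<le> p \<and> p \<le> int n \<and> \<not> label n w p}"
    unfolding label_def by auto
  moreover have "card ({p\<in>points n. int n < p} \<union> {p\<in>points n. - int n \<le> p \<and> p \<le> int n \<and> \<not> label n w p}) =
      card {p\<in>points n. int n < p} + card {p\<in>points n. - int n \<le> p \<and> p \<le> int n \<and> \<not> label n w p}"
    by (rule card_Un_disjoint) (use finite_points[of n] in auto)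
  ultimately show "card {p\<in>points n. \<not> label n w p} = 2 * n"
    using card_points_above[of n] card_middle_points_label(2)[OF w] by simp
qed

lemma dyck_labelling_points:
  assumes w: "w \<in> weylD n"
  shows "dyck_labelling (points n) (label n w)"
  unfolding dyck_labelling_def
proof (intro conjI allI)
  show "card {p\<in>points n. label n w p} = card {p\<in>points n. \<not> label n w p}"
    using card_points_label[OF w] by simp
next
  fix t
  let ?plus = "{p\<in>points n. p \<le> t \<and> label n w p}" and ?minus = "{p\<in>points n. p \<le> t \<and> \<not> label n w p}"
  show "card ?minus \<le> card ?plus"
  proof (cases "t < - int n")
    case True
    then have "?minus = {}" unfolding label_def by auto
    then show ?thesis by (simp only: card.empty le0)
  next
    case False
    then have below: "{p\<in>points n. p < - int n} \<subseteq> ?plus" unfolding label_def by auto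
    have outer: "n \<le> card ?plus"
      using card_mono[OF _ below] card_points_below[of n] finite_points[of n] by simp
    show ?thesis
    proof (cases "t \<le> int n")
      case True
      then have middle: "?minus \<subseteq> {p\<in>points n. - int n \<le> p \<and> p \<le> int n \<and> \<not> label n w p}"
        unfolding label_def by auto
      have "card ?minus \<le> n"
        using card_mono[OF _ middle] card_middle_points_label(2)[OF w] finite_points[of n] by simp
      then show ?thesis using outer by linarith
    next
      case False
      then have "?plus = {p\<in>points n. label n w p}" unfolding label_def by auto
      moreover have "card ?minus \<le> card {p\<in>points n. \<not> label n w p}"
        by (rule card_mono) (use finite_points[of n] in auto)
      ultimately show ?thesis using card_points_label[OF w] by simp
    qed
  qed
qed

lemma nc_matching_matching:
  assumes "w \<in> weylD n"
  shows "nc_matching (points n) (label n w) (matching n w)"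
proof -
  obtain M where M: "nc_matching (points n) (label n w) M"
    using nc_matching_exists[OF finite_points dyck_labelling_points[OF assms]] by blast
  show ?thesis
    unfolding matching_def
  proof (rule theI[of _ M])
    show "M' = M" if "nc_matching (points n) (label n w) M'" for M'
      using nc_matching_unique[OF finite_points that M] .
  qed (rule M)
qed

lemma symmetric_nc_matching_matching:
  assumes "w \<in> weylD n"
  shows "symmetric_nc_matching (points n) (label n w) (matching n w)"
proof
  show "finite (points n)" by (rule finite_points)
  show "nc_matching (points n) (label n w) (matching n w)" by (rule nc_matching_matching[OF assms])
  show "- x \<in> points n" if "x \<in> points n" for x using uminus_points[OF that] .
  show "label n w (- x) = (\<not> label n w x)" if "x \<in> points n" for x using label_uminus[OF assms that] .
qed

section \<open>Linked pairs of arcs\<close>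

text \<open>For the right ends \<open>Y\<close> of the arcs crossing \<open>0\<close>, indexed from \<open>0\<close>, the crossing arcs through
  \<open>Y ! (2 * j)\<close> and \<open>Y ! (2 * j + 1)\<close> are replaced by the linked pair
  \<open>linked_arc Y (2 * j)\<close>, \<open>linked_arc Y (2 * j + 1)\<close>.\<close>

definition twin :: "nat \<Rightarrow> nat" where
  "twin i = (if even i then Suc i else i - 1)"

definition linked_arc :: "int list \<Rightarrow> nat \<Rightarrow> int set" where
  "linked_arc Y i = {- (Y ! twin i), Y ! i}"

definition linked_arcs :: "int list \<Rightarrow> int set set" where
  "linked_arcs Y = linked_arc Y ` {..<length Y}"

definition linked_pairs :: "int list \<Rightarrow> int set set set" where
  "linked_pairs Y = {{linked_arc Y (2 * j), linked_arc Y (2 * j + 1)} | j. j < length Y div 2}"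

definition crosses_zero :: "int set \<Rightarrow> bool" where
  "crosses_zero A \<longleftrightarrow> (\<exists>a\<in>A. \<exists>b\<in>A. a < 0 \<and> 0 < b)"

lemma twin_twin [simp]: "twin (twin i) = i"
  unfolding twin_def by (auto simp: odd_pos)

lemma twin_neq: "twin i \<noteq> i"
  unfolding twin_def by (auto dest: odd_pos)

lemma twin_less: "even m \<Longrightarrow> i < m \<Longrightarrow> twin i < m"
  unfolding twin_def by (cases "even i") (auto, presburger)

locale crossing_list =
  fixes Y :: "int list"
  assumes distinct_Y: "distinct Y" and positive_Y: "\<And>y. y \<in> set Y \<Longrightarrow> 0 < y"
    and even_length: "even (length Y)"
begin

lemma nth_positive: "i < length Y \<Longrightarrow> 0 < Y ! i"
  using positive_Y nth_mem by blast

lemma nth_eq_iff: "i < length Y \<Longrightarrow> j < length Y \<Longrightarrow> Y ! i = Y ! j \<longleftrightarrow> i = j"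
  using distinct_Y nth_eq_iff_index_eq by blast

lemma mem_linked_arc:
  assumes "i < length Y"
  shows "x \<in> linked_arc Y i \<longleftrightarrow> (x < 0 \<and> x = - (Y ! twin i)) \<or> (0 < x \<and> x = Y ! i)"
  using nth_positive[OF assms] nth_positive[OF twin_less[OF even_length assms]]
  unfolding linked_arc_def by auto

lemma uminus_linked_arc: "uminus ` linked_arc Y i = linked_arc Y (twin i)"
  unfolding linked_arc_def by auto

lemma linked_arc_crosses_zero:
  assumes "i < length Y"
  shows "crosses_zero (linked_arc Y i)"
  using nth_positive[OF assms] nth_positive[OF twin_less[OF even_length assms]]
  unfolding crosses_zero_def linked_arc_def by auto

lemma linked_arc_eq_iff:
  assumes "i < length Y" "j < length Y"
  shows "linked_arc Y i = linked_arc Y j \<longleftrightarrow> i = j"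
proof
  assume "linked_arc Y i = linked_arc Y j"
  then have "Y ! i \<in> linked_arc Y j" unfolding linked_arc_def by blast
  then have "Y ! i = Y ! j" using mem_linked_arc[OF assms(2)] nth_positive[OF assms(1)] by simp
  then show "i = j" using nth_eq_iff[OF assms] by simp
qed simp

lemma perfect_matching_linked_arcs:
  "perfect_matching (set Y \<union> uminus ` set Y) (linked_arcs Y)"
proof (rule perfect_matchingI)
  fix A assume "A \<in> linked_arcs Y"
  then obtain i where i: "i < length Y" "A = linked_arc Y i" unfolding linked_arcs_def by blast
  have t: "twin i < length Y" using twin_less[OF even_length i(1)] .
  show "card A = 2" using i nth_positive[OF i(1)] nth_positive[OF t] unfolding linked_arc_def by simp
  show "A \<subseteq> set Y \<union> uminus ` set Y" using i t unfolding linked_arc_def by auto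
next
  fix p assume "p \<in> set Y \<union> uminus ` set Y"
  then obtain i where i: "i < length Y" "p = Y ! i \<or> p = - (Y ! i)" by (auto simp: in_set_conv_nth)
  then have "p \<in> linked_arc Y i \<or> p \<in> linked_arc Y (twin i)" unfolding linked_arc_def by auto
  then show "\<exists>A\<in>linked_arcs Y. p \<in> A"
    using i(1) twin_less[OF even_length i(1)] unfolding linked_arcs_def by blast
next
  fix A B p assume "A \<in> linked_arcs Y" "B \<in> linked_arcs Y" and p: "p \<in> A" "p \<in> B"
  then obtain i j where ij: "i < length Y" "j < length Y" "A = linked_arc Y i" "B = linked_arc Y j"
    unfolding linked_arcs_def by blast
  have "i = j"
  proof (cases "0 < p")
    case True
    then have "Y ! i = Y ! j" using p ij mem_linked_arc[OF ij(1)] mem_linked_arc[OF ij(2)] by simp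
    then show ?thesis using nth_eq_iff[OF ij(1,2)] by simp
  next
    case False
    then have "Y ! twin i = Y ! twin j" using p ij mem_linked_arc[OF ij(1)] mem_linked_arc[OF ij(2)] by auto
    then have "twin i = twin j"
      using nth_eq_iff[OF twin_less[OF even_length ij(1)] twin_less[OF even_length ij(2)]] by simp
    then show ?thesis by (metis twin_twin)
  qed
  then show "A = B" using ij by simp
qed

lemma pair_indices:
  assumes "j < length Y div 2"
  shows "2 * j < length Y" "2 * j + 1 < length Y"
proof -
  have "2 * (length Y div 2) = length Y" using even_length by simp
  then show "2 * j < length Y" "2 * j + 1 < length Y" using assms by linarith+
qed

lemma linked_pairs_eq:
  "linked_pairs Y = (\<lambda>j. {linked_arc Y (2 * j), uminus ` linked_arc Y (2 * j)}) ` {..<length Y div 2}"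
  unfolding linked_pairs_def uminus_linked_arc by (auto simp: twin_def)

lemma Union_linked_pairs: "\<Union>(linked_pairs Y) = linked_arcs Y"
proof (intro equalityI subsetI)
  fix A assume "A \<in> \<Union>(linked_pairs Y)"
  then obtain j where "j < length Y div 2" "A = linked_arc Y (2 * j) \<or> A = linked_arc Y (2 * j + 1)"
    unfolding linked_pairs_def by blast
  then show "A \<in> linked_arcs Y" using pair_indices unfolding linked_arcs_def by auto
next
  fix A assume "A \<in> linked_arcs Y"
  then obtain i where i: "i < length Y" "A = linked_arc Y i" unfolding linked_arcs_def by blast
  define j where "j = i div 2"
  have "2 * j \<le> i" "2 * (length Y div 2) = length Y"
    unfolding j_def using even_length by (simp_all add: times_div_less_eq_dividend)
  then have j: "j < length Y div 2" using i(1) by linarith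
  have "A = linked_arc Y (2 * j) \<or> A = linked_arc Y (2 * j + 1)"
    using i(2) unfolding j_def by (cases "even i") simp_all
  then show "A \<in> \<Union>(linked_pairs Y)" using j unfolding linked_pairs_def by blast
qed

lemma card_linked_pair: "L \<in> linked_pairs Y \<Longrightarrow> card L = 2"
  unfolding linked_pairs_def using linked_arc_eq_iff pair_indices by fastforce

lemma linked_pairs_disjoint: "pairwise disjnt (linked_pairs Y)"
proof (rule pairwiseI)
  fix L L' assume "L \<in> linked_pairs Y" "L' \<in> linked_pairs Y" "L \<noteq> L'"
  then obtain j j' where j: "j < length Y div 2" "j' < length Y div 2" "j \<noteq> j'"
    and L: "L = {linked_arc Y (2 * j), linked_arc Y (2 * j + 1)}"
    and L': "L' = {linked_arc Y (2 * j'), linked_arc Y (2 * j' + 1)}"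
    unfolding linked_pairs_def by blast
  have "linked_arc Y a \<noteq> linked_arc Y b" if "a \<in> {2 * j, 2 * j + 1}" "b \<in> {2 * j', 2 * j' + 1}" for a b
  proof -
    have "a div 2 \<noteq> b div 2" using that j(3) by auto
    then have "a \<noteq> b" by blast
    moreover have "a < length Y" "b < length Y" using that pair_indices[OF j(1)] pair_indices[OF j(2)] by auto
    ultimately show ?thesis using linked_arc_eq_iff by blast
  qed
  then show "disjnt L L'" unfolding L L' disjnt_def by blast
qed

lemma card_linked_arcs_within:
  assumes Z_uminus: "\<And>x. x \<in> Z \<Longrightarrow> - x \<in> Z"
  shows "card {A \<in> linked_arcs Y. A \<subseteq> Z} = 2 * card {L \<in> linked_pairs Y. meets Z L}"
proof -
  let ?met = "{L \<in> linked_pairs Y. meets Z L}"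
  have "{A \<in> linked_arcs Y. A \<subseteq> Z} = \<Union>?met"
  proof (intro equalityI subsetI)
    fix A assume "A \<in> {A \<in> linked_arcs Y. A \<subseteq> Z}"
    then obtain L where "L \<in> linked_pairs Y" "A \<in> L" "A \<subseteq> Z"
      unfolding Union_linked_pairs[symmetric] by blast
    then show "A \<in> \<Union>?met" unfolding meets_def by blast
  next
    fix A assume "A \<in> \<Union>?met"
    then obtain L B where L: "L \<in> linked_pairs Y" "A \<in> L" "B \<in> L" "B \<subseteq> Z"
      unfolding meets_def by blast
    then obtain C where C: "L = {C, uminus ` C}"
      unfolding linked_pairs_eq by blast
    have "uminus ` uminus ` C = C" by (simp add: image_image)
    then have "A = B \<or> A = uminus ` B" using L(2,3) C by auto
    then have "A \<subseteq> Z" using L(4) Z_uminus by auto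
    then show "A \<in> {A \<in> linked_arcs Y. A \<subseteq> Z}"
      using L(1,2) Union_linked_pairs by blast
  qed
  moreover have "card (\<Union>?met) = sum card ?met"
    by (rule card_Union_disjoint)
      (use pairwise_subset[OF linked_pairs_disjoint] card_linked_pair in \<open>auto intro: card_ge_0_finite\<close>)
  moreover have "sum card ?met = 2 * card ?met"
    using card_linked_pair by simp
  ultimately show ?thesis by simp
qed

lemma antipodes_in_linked_pair:
  assumes "L \<in> linked_pairs Y" "\<forall>A\<in>L. A \<subseteq> Z"
  obtains p where "p \<in> Z" "- p \<in> Z"
proof -
  obtain j where "L = {linked_arc Y (2 * j), uminus ` linked_arc Y (2 * j)}"
    using assms(1) unfolding linked_pairs_eq by blast
  then show ?thesis using assms(2) that[of "Y ! (2 * j)"] unfolding linked_arc_def by auto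
qed

end

section \<open>Alternating walks\<close>

definition signed_involution :: "int set \<Rightarrow> (int \<Rightarrow> int) \<Rightarrow> bool" where
  "signed_involution P f \<longleftrightarrow>
     (\<forall>x\<in>P. f x \<in> P \<and> f (f x) = x \<and> f x \<noteq> x \<and> f (- x) = - f x \<and> f x \<noteq> - x)"

lemma signed_involution_partner:
  assumes pm: "perfect_matching P S"
    and S_uminus: "\<And>A. A \<in> S \<Longrightarrow> uminus ` A \<in> S"
    and no_antipodes: "\<And>A x. A \<in> S \<Longrightarrow> x \<in> A \<Longrightarrow> - x \<notin> A"
  shows "signed_involution P (partner S)"
  unfolding signed_involution_def
proof (intro ballI conjI)
  fix x assume x: "x \<in> P"
  show "partner S x \<in> P" "partner S x \<noteq> x"
    using perfect_matching_partner[OF pm x] by simp_all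
  show "partner S (partner S x) = x" by (rule partner_partner[OF pm x])
  show "partner S (- x) = - partner S x" by (rule partner_uminus[OF pm x S_uminus])
  show "partner S x \<noteq> - x"
    using no_antipodes[OF perfect_matching_partner(1)[OF pm x], of x] by auto
qed

definition crossing_edges :: "(int \<Rightarrow> int) \<Rightarrow> int set \<Rightarrow> int set set" where
  "crossing_edges f Z = {{x, f x} | x. x \<in> Z \<and> (0 < x) \<noteq> (0 < f x)}"

text \<open>In a circle diagram \<open>c\<close> is the cup partner and \<open>d\<close> the cap partner, and a circle is
  the set of points visited by \<open>walk p\<close>.\<close>

locale alternating_walk =
  fixes P :: "int set" and c d :: "int \<Rightarrow> int"
  assumes finite_P: "finite P" and zero_notin_P: "0 \<notin> P"
    and signed_c: "signed_involution P c" and signed_d: "signed_involution P d"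
begin

definition step :: "nat \<Rightarrow> int \<Rightarrow> int" where
  "step i = (if even i then c else d)"

lemma step_0 [simp]: "step 0 = c" and step_Suc_0 [simp]: "step (Suc 0) = d"
  by (simp_all add: step_def)

lemma step_parity: "even i = even j \<Longrightarrow> step i = step j"
  by (simp add: step_def)

lemma
  assumes "x \<in> P"
  shows step_in: "step i x \<in> P" and step_step: "step i (step i x) = x"
    and step_neq: "step i x \<noteq> x" and step_uminus: "step i (- x) = - step i x"
    and step_neq_uminus: "step i x \<noteq> - x"
  using assms signed_c signed_d unfolding signed_involution_def step_def by auto

fun walk :: "int \<Rightarrow> nat \<Rightarrow> int" where
  "walk p 0 = p"
| "walk p (Suc i) = step i (walk p i)"

lemma walk_in: "p \<in> P \<Longrightarrow> walk p i \<in> P"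
  by (induction i) (simp_all add: step_in)

lemma step_walk_Suc: "p \<in> P \<Longrightarrow> step i (walk p (Suc i)) = walk p i"
  by (simp add: step_step walk_in)

lemma walk_shift:
  assumes "walk p a = walk p b" "even a = even b"
  shows "walk p (a + t) = walk p (b + t)"
proof (induction t)
  case (Suc t)
  then show ?case
    using step_parity[of "a + t" "b + t"] assms(2) by simp
qed (use assms(1) in simp)

lemma walk_shift_back:
  assumes p: "p \<in> P" and "walk p a = walk p b" "even a = even b" "t \<le> a" "t \<le> b"
  shows "walk p (a - t) = walk p (b - t)"
  using assms(4,5)
proof (induction t)
  case (Suc t)
  have "walk p (a - Suc t) = step (a - Suc t) (walk p (a - t))"
    using step_walk_Suc[OF p, of "a - Suc t"] Suc.prems by (simp add: Suc_diff_Suc)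
  also have "\<dots> = step (b - Suc t) (walk p (b - t))"
    using Suc step_parity[of "a - Suc t" "b - Suc t"] assms(3) by simp
  also have "\<dots> = walk p (b - Suc t)"
    using step_walk_Suc[OF p, of "b - Suc t"] Suc.prems by (simp add: Suc_diff_Suc)
  finally show ?case .
qed (use assms(2) in simp)

text \<open>If the walk returned after an odd number of steps, the steps just inside both ends would apply
  the same involution to the same point; shrinking inwards ends with a step fixing a point.\<close>
lemma walk_neq_odd_distance:
  assumes p: "p \<in> P"
  shows "a < b \<Longrightarrow> odd (b - a) \<Longrightarrow> walk p a \<noteq> walk p b"
proof (induction "b - a" arbitrary: a b rule: less_induct)
  case less
  obtain k where k: "b - a = 2 * k + 1" using \<open>odd (b - a)\<close> by (rule oddE)
  show ?case
  proof (cases k)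
    case 0
    then have "b = Suc a" using k less.prems by simp
    then show ?thesis using step_neq[OF walk_in[OF p], of a a] by (metis walk.simps(2))
  next
    case (Suc k')
    have b: "b = Suc (b - 1)" "b - 1 = a + 2 * k" using k less.prems by auto
    show ?thesis
    proof
      assume eq: "walk p a = walk p b"
      have "walk p (b - 1) = step (b - 1) (walk p b)"
        using step_walk_Suc[OF p, of "b - 1"] b(1) by simp
      also have "\<dots> = walk p (Suc a)"
        using eq step_parity[of "a + 2 * k" a] b(2) by simp
      finally have "walk p (Suc a) = walk p (b - 1)" ..
      moreover have "b - 1 - Suc a = 2 * k' + 1" using b(2) Suc by simp
      ultimately show False
        using less.hyps[of "b - 1" "Suc a"] b(2) Suc k by simp
    qed
  qed
qed

lemma walk_add_period:
  assumes "even N" "walk p N = p"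
  shows "walk p (N * q + t) = walk p t"
proof (induction q)
  case (Suc q)
  have "walk p (N + (N * q + t)) = walk p (0 + (N * q + t))"
    by (rule walk_shift) (use assms in simp_all)
  then show ?case using Suc by (simp add: add.assoc)
qed simp

lemma walk_mod_period:
  assumes "even N" "walk p N = p"
  shows "walk p t = walk p (t mod N)"
  using walk_add_period[OF assms, of "t div N" "t mod N"] by simp

lemma walk_periodic:
  assumes p: "p \<in> P"
  obtains N where "N > 0" "even N" "walk p N = p"
proof -
  have "\<not> inj (\<lambda>i. walk p (2 * i))"
  proof
    assume "inj (\<lambda>i. walk p (2 * i))"
    moreover have "range (\<lambda>i. walk p (2 * i)) \<subseteq> P" using walk_in[OF p] by auto
    ultimately show False
      using finite_P by (meson finite_imageD finite_subset infinite_UNIV_nat)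
  qed
  then obtain a b where ab: "a < b" "walk p (2 * a) = walk p (2 * b)"
    unfolding inj_def by (metis linorder_neqE_nat)
  have "walk p (2 * a - 2 * a) = walk p (2 * b - 2 * a)"
    by (rule walk_shift_back[OF p ab(2)]) (use ab(1) in auto)
  then show ?thesis
    using that[of "2 * b - 2 * a"] ab(1) by simp
qed

lemma step_Suc_pair: "{step i x, step (Suc i) x} = {c x, d x}"
  by (auto simp: step_def)

lemma range_walk_closed:
  assumes p: "p \<in> P" and x: "x \<in> range (walk p)"
  shows "c x \<in> range (walk p)" "d x \<in> range (walk p)"
proof -
  obtain N where N: "N > 0" "even N" "walk p N = p" using walk_periodic[OF p] .
  obtain t where "x = walk p t" using x by auto
  then have x: "x = walk p (Suc (N + t - 1))"
    using walk_add_period[OF N(2,3), of 1 t] N(1) by simp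
  have "step (Suc (N + t - 1)) x \<in> range (walk p)" "step (N + t - 1) x \<in> range (walk p)"
    using x step_walk_Suc[OF p, of "N + t - 1"] by (metis rangeI walk.simps(2))+
  then show "c x \<in> range (walk p)" "d x \<in> range (walk p)"
    using step_Suc_pair[of "N + t - 1" x] by (metis insertCI insertE singletonD)+
qed

lemma reachable_eq_range_walk:
  assumes p: "p \<in> P"
  shows "{(x, y). x \<in> P \<and> (y = c x \<or> y = d x)}\<^sup>* `` {p} = range (walk p)"
proof
  show "{(x, y). x \<in> P \<and> (y = c x \<or> y = d x)}\<^sup>* `` {p} \<subseteq> range (walk p)"
  proof
    fix z assume "z \<in> {(x, y). x \<in> P \<and> (y = c x \<or> y = d x)}\<^sup>* `` {p}"
    then have "(p, z) \<in> {(x, y). x \<in> P \<and> (y = c x \<or> y = d x)}\<^sup>*" by simp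
    then show "z \<in> range (walk p)"
    proof (induction rule: rtrancl_induct)
      case base
      then show ?case using walk.simps(1) by (metis rangeI)
    next
      case (step y z)
      then show ?case using range_walk_closed[OF p] by auto
    qed
  qed
  show "range (walk p) \<subseteq> {(x, y). x \<in> P \<and> (y = c x \<or> y = d x)}\<^sup>* `` {p}"
  proof
    fix z assume "z \<in> range (walk p)"
    then obtain i where z: "z = walk p i" by auto
    have "walk p i \<in> {(x, y). x \<in> P \<and> (y = c x \<or> y = d x)}\<^sup>* `` {p}"
    proof (induction i)
      case (Suc i)
      moreover have "walk p (Suc i) = c (walk p i) \<or> walk p (Suc i) = d (walk p i)"
        by (simp add: step_def)
      ultimately show ?case
        using walk_in[OF p, of i] by (auto intro: rtrancl_into_rtrancl)
    qed simp
    then show "z \<in> {(x, y). x \<in> P \<and> (y = c x \<or> y = d x)}\<^sup>* `` {p}" using z by simp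
  qed
qed

end

locale antipodal_walk = alternating_walk +
  fixes p :: int
  assumes p_in: "p \<in> P" and antipode_reached: "- p \<in> range (walk p)"
begin

definition half_period :: nat where
  "half_period = (LEAST k. walk p k = - p)"

lemma walk_half_period: "walk p half_period = - p"
proof -
  obtain k where "walk p k = - p" using antipode_reached by (auto simp: eq_commute)
  then show ?thesis unfolding half_period_def by (rule LeastI)
qed

lemma walk_neq_antipode: "i < half_period \<Longrightarrow> walk p i \<noteq> - p"
  unfolding half_period_def using not_less_Least by blast

lemma half_period_pos: "0 < half_period"
proof (rule ccontr)
  assume "\<not> 0 < half_period"
  then have "p = - p" using walk_half_period by simp
  then show False using p_in zero_notin_P by simp
qed

text \<open>If the half period were odd, the walk from \<open>p\<close> read backwards from \<open>-p\<close> would be its own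
  negation, so the middle step would join some \<open>x\<close> to \<open>-x\<close>.\<close>
lemma even_half_period: "even half_period"
proof (rule ccontr)
  assume odd: "odd half_period"
  have mirror: "walk p (half_period - i) = - walk p i" if "i \<le> half_period" for i
    using that
  proof (induction i)
    case (Suc i)
    have "walk p (half_period - Suc i) = step (half_period - Suc i) (walk p (half_period - i))"
      using step_walk_Suc[OF p_in, of "half_period - Suc i"] Suc.prems by (simp add: Suc_diff_Suc)
    also have "\<dots> = step i (- walk p i)"
      using Suc step_parity[of "half_period - Suc i" i] odd by auto
    finally show ?case by (simp add: step_uminus walk_in[OF p_in])
  qed (simp add: walk_half_period)
  obtain h where "half_period = 2 * h + 1" using odd by (rule oddE)
  then have h: "half_period = Suc (2 * h)" by simp
  have "step h (walk p h) = - walk p h"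
    using mirror[of h] h by (simp add: Suc_diff_le)
  then show False using step_neq_uminus[OF walk_in[OF p_in]] by blast
qed

lemma walk_add_half_period: "walk p (half_period + i) = - walk p i"
proof (induction i)
  case (Suc i)
  then show ?case
    using step_parity[of "half_period + i" i] even_half_period
    by (simp add: step_uminus walk_in[OF p_in])
qed (simp add: walk_half_period)

lemma walk_full_period: "walk p (2 * half_period) = p"
  using walk_add_half_period[of half_period] walk_half_period by (simp add: mult_2)

lemma walk_neq_start:
  assumes "0 < t" "t < 2 * half_period" "even t"
  shows "walk p t \<noteq> p"
proof
  assume t: "walk p t = p"
  show False
  proof (cases "t \<le> half_period")
    case True
    have "walk p (half_period mod t) = - p"
      using walk_mod_period[OF assms(3) t, of half_period] walk_half_period by simp
    moreover have "half_period mod t < half_period"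
      using True assms(1) by (meson mod_less_divisor order_less_le_trans)
    ultimately show False using walk_neq_antipode by blast
  next
    case False
    have "walk p (t - half_period) = - p"
      using walk_add_half_period[of "t - half_period"] t False by simp
    then show False using walk_neq_antipode assms(2) False by simp
  qed
qed

lemma inj_on_walk: "inj_on (walk p) {..<2 * half_period}"
proof -
  have "walk p a \<noteq> walk p b" if ab: "a < b" "b < 2 * half_period" for a b
  proof
    assume eq: "walk p a = walk p b"
    show False
    proof (cases "even a = even b")
      case True
      have "walk p (a - a) = walk p (b - a)"
        by (rule walk_shift_back[OF p_in eq True]) (use ab in auto)
      moreover have "walk p (b - a) \<noteq> p"
        by (rule walk_neq_start) (use ab True in auto)
      ultimately show False by simp
    next
      case False
      then have "odd (b - a)" using ab(1) by simp
      then show False using walk_neq_odd_distance[OF p_in ab(1)] eq by simp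
    qed
  qed
  then show ?thesis
    by (intro inj_onI) (metis lessThan_iff linorder_neqE_nat)
qed

lemma range_walk_uminus:
  assumes "x \<in> range (walk p)"
  shows "- x \<in> range (walk p)"
proof -
  obtain t where "x = walk p t" using assms by blast
  then have "- x = walk p (half_period + t)" using walk_add_half_period by simp
  then show ?thesis by simp
qed

definition sign_change :: "nat \<Rightarrow> bool" where
  "sign_change i \<longleftrightarrow> (0 < walk p i) \<noteq> (0 < walk p (Suc i))"

lemma odd_card_sign_changes: "odd (card {i. i < k \<and> sign_change i}) \<longleftrightarrow> (0 < walk p k) \<noteq> (0 < p)"
proof (induction k)
  case (Suc k)
  have "{i. i < Suc k \<and> sign_change i} =
      (if sign_change k then insert k {i. i < k \<and> sign_change i} else {i. i < k \<and> sign_change i})"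
    by (auto simp: less_Suc_eq)
  then show ?case using Suc unfolding sign_change_def by auto
qed simp

lemma sign_change_add_half_period: "sign_change (half_period + i) = sign_change i"
proof -
  have nonzero: "walk p k \<noteq> 0" for k using walk_in[OF p_in, of k] zero_notin_P by auto
  have "walk p (Suc (half_period + i)) = - walk p (Suc i)"
    using walk_add_half_period[of "Suc i"] by (simp only: add_Suc_right)
  then show ?thesis
    using walk_add_half_period[of i] nonzero[of i] nonzero[of "Suc i"]
    unfolding sign_change_def by (auto simp del: walk.simps)
qed

lemma card_sign_changes_full_period:
  "card {i. i < 2 * half_period \<and> sign_change i} = 2 * card {i. i < half_period \<and> sign_change i}"
proof -
  let ?A = "{i. i < half_period \<and> sign_change i}"
  have "{i. i < 2 * half_period \<and> sign_change i} = ?A \<union> (+) half_period ` ?A"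
  proof (intro equalityI subsetI)
    fix i assume i: "i \<in> {i. i < 2 * half_period \<and> sign_change i}"
    show "i \<in> ?A \<union> (+) half_period ` ?A"
    proof (cases "i < half_period")
      case True
      then show ?thesis using i by simp
    next
      case False
      have "i < 2 * half_period" using i by simp
      then have "i - half_period < half_period" by linarith
      then have "i - half_period \<in> ?A"
        using i False sign_change_add_half_period[of "i - half_period"] by simp
      moreover have "i = half_period + (i - half_period)" using False by simp
      ultimately show ?thesis by blast
    qed
  next
    fix i assume "i \<in> ?A \<union> (+) half_period ` ?A"
    then show "i \<in> {i. i < 2 * half_period \<and> sign_change i}"
      using sign_change_add_half_period by auto
  qed
  moreover have "?A \<inter> (+) half_period ` ?A = {}" by auto
  moreover have "card ((+) half_period ` ?A) = card ?A" by (simp add: card_image)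
  ultimately show ?thesis by (simp add: card_Un_disjoint)
qed

definition edge :: "nat \<Rightarrow> int set" where
  "edge i = {walk p i, walk p (Suc i)}"

lemma inj_on_edge_same_parity: "inj_on edge {i. i < 2 * half_period \<and> even i = b}"
proof (rule inj_onI)
  fix i j assume i: "i \<in> {i. i < 2 * half_period \<and> even i = b}" and j: "j \<in> {i. i < 2 * half_period \<and> even i = b}"
    and eq: "edge i = edge j"
  have "walk p i \<in> edge j" using eq unfolding edge_def by blast
  then have "walk p i = walk p j \<or> walk p i = walk p (Suc j)" unfolding edge_def by simp
  moreover have "walk p (Suc j) = walk p (Suc j mod (2 * half_period))"
    by (rule walk_mod_period) (simp_all add: walk_full_period)
  moreover have "i \<noteq> Suc j mod (2 * half_period)"
  proof (cases "Suc j = 2 * half_period")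
    case True
    then have "odd j" by (metis even_Suc even_mult_iff even_numeral)
    then show ?thesis using True i j by (auto simp: odd_pos)
  next
    case False
    then show ?thesis using i j by auto
  qed
  ultimately show "i = j"
    using inj_on_walk i j half_period_pos unfolding inj_on_def by auto
qed

lemma walk_Suc_index:
  assumes "t < 2 * half_period"
  obtains s where "s < 2 * half_period" "walk p (Suc s) = walk p t" "even s \<noteq> even t"
proof (cases t)
  case 0
  then show ?thesis
    using that[of "2 * half_period - 1"] half_period_pos walk_full_period by simp
next
  case (Suc s)
  then show ?thesis using that[of s] assms by simp
qed

lemma crossing_edges_step:
  "crossing_edges (step j) (range (walk p)) = edge ` {i. i < 2 * half_period \<and> even i = even j \<and> sign_change i}"
proof (rule set_eqI, rule iffI)
  fix A assume "A \<in> crossing_edges (step j) (range (walk p))"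
  then obtain x where A: "A = {x, step j x}" "x \<in> range (walk p)" "(0 < x) \<noteq> (0 < step j x)"
    unfolding crossing_edges_def by blast
  obtain t0 where t0: "x = walk p t0" using A(2) by blast
  define t where "t = t0 mod (2 * half_period)"
  have t: "t < 2 * half_period" "x = walk p t"
    unfolding t_def using t0 half_period_pos walk_mod_period[of "2 * half_period" p t0] walk_full_period
    by simp_all
  show "A \<in> edge ` {i. i < 2 * half_period \<and> even i = even j \<and> sign_change i}"
  proof (cases "even t = even j")
    case True
    then have "step j x = walk p (Suc t)" using t(2) step_parity[of t j] by simp
    then have "A = edge t" "sign_change t" using A t(2) unfolding edge_def sign_change_def by simp_all
    then show ?thesis using t(1) True by blast
  next
    case False
    obtain s where s: "s < 2 * half_period" "walk p (Suc s) = walk p t" "even s \<noteq> even t"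
      by (rule walk_Suc_index[OF t(1)])
    have par: "even s = even j" using s(3) False by auto
    then have "step j x = walk p s"
      using step_walk_Suc[OF p_in, of s] step_parity[of s j] s(2) t(2) by simp
    then have "A = edge s" "sign_change s"
      using A s(2) t(2) unfolding edge_def sign_change_def by (simp_all add: insert_commute)
    then show ?thesis using s(1) par by blast
  qed
next
  fix A assume "A \<in> edge ` {i. i < 2 * half_period \<and> even i = even j \<and> sign_change i}"
  then obtain i where i: "even i = even j" "sign_change i" "A = edge i" by blast
  then have "walk p (Suc i) = step j (walk p i)" using step_parity[of i j] by simp
  then have "A = {walk p i, step j (walk p i)}" "(0 < walk p i) \<noteq> (0 < step j (walk p i))"
    using i unfolding edge_def sign_change_def by simp_all
  then show "A \<in> crossing_edges (step j) (range (walk p))"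
    unfolding crossing_edges_def by blast
qed

theorem card_crossing_edges_twice_odd:
  "\<exists>m. card (crossing_edges c (range (walk p))) + card (crossing_edges d (range (walk p))) = 2 * m \<and> odd m"
proof -
  let ?S = "\<lambda>b. {i. i < 2 * half_period \<and> even i = b \<and> sign_change i}"
  have card_S: "card (edge ` ?S b) = card (?S b)" for b
    by (rule card_image, rule inj_on_subset[OF inj_on_edge_same_parity]) auto
  have "crossing_edges c (range (walk p)) = edge ` ?S True"
    using crossing_edges_step[of 0] by simp
  moreover have "crossing_edges d (range (walk p)) = edge ` ?S False"
    using crossing_edges_step[of 1] by simp
  ultimately have "card (crossing_edges c (range (walk p))) + card (crossing_edges d (range (walk p)))
      = card (?S True \<union> ?S False)"
    using card_S[of True] card_S[of False] card_Un_disjoint[of "?S True" "?S False"]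
    by (simp add: disjoint_iff)
  also have "?S True \<union> ?S False = {i. i < 2 * half_period \<and> sign_change i}" by auto
  also have "card \<dots> = 2 * card {i. i < half_period \<and> sign_change i}"
    by (rule card_sign_changes_full_period)
  finally have "card (crossing_edges c (range (walk p))) + card (crossing_edges d (range (walk p)))
      = 2 * card {i. i < half_period \<and> sign_change i}" .
  moreover have "p \<noteq> 0" using p_in zero_notin_P by auto
  then have "odd (card {i. i < half_period \<and> sign_change i})"
    using odd_card_sign_changes[of half_period] walk_half_period by auto
  ultimately show ?thesis by blast
qed

end

lemma crossing_edges_partner:
  assumes pm: "perfect_matching P S" and zero: "0 \<notin> P" and Z: "Z \<subseteq> P"
    and Z_partner: "\<And>x. x \<in> Z \<Longrightarrow> partner S x \<in> Z"
  shows "crossing_edges (partner S) Z = {A \<in> S. A \<subseteq> Z \<and> crosses_zero A}"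
proof (intro equalityI subsetI)
  fix A assume "A \<in> crossing_edges (partner S) Z"
  then obtain x where A: "A = {x, partner S x}" "x \<in> Z" "(0 < x) \<noteq> (0 < partner S x)"
    unfolding crossing_edges_def by blast
  have x: "x \<in> P" using A(2) Z by blast
  have "x \<noteq> 0" "partner S x \<noteq> 0" using x perfect_matching_partner(3)[OF pm x] zero by auto
  then have "crosses_zero A" using A(1,3) unfolding crosses_zero_def by auto
  moreover have "A \<in> S" using perfect_matching_partner(1)[OF pm x] A(1) by simp
  moreover have "A \<subseteq> Z" using A Z_partner by simp
  ultimately show "A \<in> {A \<in> S. A \<subseteq> Z \<and> crosses_zero A}" by simp
next
  fix A assume "A \<in> {A \<in> S. A \<subseteq> Z \<and> crosses_zero A}"
  then have A: "A \<in> S" "A \<subseteq> Z" "crosses_zero A" by auto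
  obtain a b where ab: "a \<in> A" "b \<in> A" "a < 0" "0 < b" using A(3) unfolding crosses_zero_def by blast
  have A_eq: "A = {a, partner S a}" by (rule perfect_matching_eq_partner[OF pm A(1) ab(1)])
  then have "b = partner S a" using ab by auto
  then have "a \<in> Z \<and> (0 < a) \<noteq> (0 < partner S a)" using ab A(2) by auto
  then show "A \<in> crossing_edges (partner S) Z" unfolding crossing_edges_def using A_eq by blast
qed

locale cup_diagram =
  fixes n :: nat and w :: "int \<Rightarrow> int"
  assumes w_in: "w \<in> weylD n"
begin

sublocale symmetric_nc_matching "points n" "label n w" "matching n w"
  by (rule symmetric_nc_matching_matching[OF w_in])

lemma set_cross_list: "set (cross_list n w) = crossing_points"
proof -
  have "finite crossing_points"
    by (rule finite_subset[OF crossing_points_subset]) (simp add: finite_points)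
  then show ?thesis unfolding cross_list_def crossing_points_def by simp
qed

sublocale crossing_list "cross_list n w"
proof
  show "distinct (cross_list n w)" unfolding cross_list_def by simp
  show "0 < y" if "y \<in> set (cross_list n w)" for y
    using that unfolding set_cross_list crossing_points_def by simp
  have "even (card crossing_points)"
    using even_card_crossing_points card_positive_points by simp
  then show "even (length (cross_list n w))"
    using distinct_card[of "cross_list n w"] set_cross_list unfolding cross_list_def by simp
qed

abbreviation crossing_ends :: "int set" where
  "crossing_ends \<equiv> set (cross_list n w) \<union> uminus ` set (cross_list n w)"

abbreviation noncrossing_arcs :: "int set set" where
  "noncrossing_arcs \<equiv> {{a, b} | a b. (a, b) \<in> matching n w \<and> (0 < a) = (0 < b)}"

lemma crossing_arc_iff:
  assumes "(a, b) \<in> matching n w"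
  shows "(0 < a) \<noteq> (0 < b) \<longleftrightarrow> (\<exists>i<length (cross_list n w). (a, b) = (- (cross_list n w ! i), cross_list n w ! i))"
proof
  assume "(0 < a) \<noteq> (0 < b)"
  then have "a < 0" "0 < b"
    using nc_matchingD(1-3)[OF nc assms] zero_notin_P by (auto simp: not_less order_le_less)
  then have "a = - b" "b \<in> set (cross_list n w)"
    using crossing_arc_antipodal[OF assms] assms unfolding set_cross_list crossing_points_def by auto
  then show "\<exists>i<length (cross_list n w). (a, b) = (- (cross_list n w ! i), cross_list n w ! i)"
    by (auto simp: in_set_conv_nth)
qed (use nth_positive in auto)

lemma cup_arcs_eq: "cup_arcs n w = noncrossing_arcs \<union> linked_arcs (cross_list n w)"
proof -
  have "2 * npairs n w = length (cross_list n w)" unfolding npairs_def using even_length by simp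
  then have "(a, b) \<in> matching n w \<and> (a, b) \<notin> {(- (cross_list n w ! i), cross_list n w ! i) | i. i < 2 * npairs n w}
      \<longleftrightarrow> (a, b) \<in> matching n w \<and> (0 < a) = (0 < b)" for a b
    using crossing_arc_iff[of a b] by auto
  moreover have "\<Union>(linked_pairs (cross_list n w)) =
      {{- (cross_list n w ! (2 * j + 1)), cross_list n w ! (2 * j)} | j. j < npairs n w}
      \<union> {{- (cross_list n w ! (2 * j)), cross_list n w ! (2 * j + 1)} | j. j < npairs n w}"
    unfolding linked_pairs_def linked_arc_def twin_def npairs_def by auto
  ultimately show ?thesis
    unfolding cup_arcs_def Let_def Union_linked_pairs[symmetric] by (simp only: Un_assoc)
qed

lemma cup_linked_eq: "cup_linked n w = linked_pairs (cross_list n w)"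
  unfolding cup_linked_def linked_pairs_def linked_arc_def twin_def npairs_def Let_def by simp

lemma perfect_matching_noncrossing_arcs: "perfect_matching (points n - crossing_ends) noncrossing_arcs"
proof -
  have pm: "perfect_matching (\<Union>noncrossing_arcs) noncrossing_arcs"
    by (rule perfect_matching_subset[OF nc_matching_perfect_matching[OF nc]]) blast
  have "\<Union>noncrossing_arcs = points n - crossing_ends"
  proof (intro equalityI subsetI)
    fix x assume "x \<in> \<Union>noncrossing_arcs"
    then obtain a b where ab: "(a, b) \<in> matching n w" "(0 < a) = (0 < b)" "x \<in> {a, b}" by blast
    have "x \<in> points n" using nc_matchingD(1,2)[OF nc ab(1)] ab(3) by auto
    moreover have "x \<notin> crossing_ends"
    proof
      assume "x \<in> crossing_ends"
      then obtain y where y: "y \<in> crossing_points" "x = y \<or> x = - y" unfolding set_cross_list by blast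
      then have "(- y, y) \<in> matching n w" "0 < y" unfolding crossing_points_def by auto
      then have "(a, b) = (- y, y)" using nc_matching_arc_unique[OF nc ab(1) _ ab(3)] y(2) by auto
      then show False using ab(2) \<open>0 < y\<close> by simp
    qed
    ultimately show "x \<in> points n - crossing_ends" by simp
  next
    fix x assume x: "x \<in> points n - crossing_ends"
    obtain a b where ab: "(a, b) \<in> matching n w" "x = a \<or> x = b" using nc_matching_cover[OF nc] x by blast
    have "(0 < a) = (0 < b)"
    proof (rule ccontr)
      assume "(0 < a) \<noteq> (0 < b)"
      then obtain i where "i < length (cross_list n w)" "(a, b) = (- (cross_list n w ! i), cross_list n w ! i)"
        using crossing_arc_iff[OF ab(1)] by blast
      then show False using x ab(2) by auto
    qed
    then show "x \<in> \<Union>noncrossing_arcs" using ab by blast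
  qed
  then show ?thesis using pm by simp
qed

lemma perfect_matching_cup_arcs: "perfect_matching (points n) (cup_arcs n w)"
proof -
  have "crossing_ends \<subseteq> points n"
    using crossing_points_subset uminus_points unfolding set_cross_list by blast
  moreover have "(points n - crossing_ends) \<inter> crossing_ends = {}" by blast
  ultimately show ?thesis
    unfolding cup_arcs_eq
    using perfect_matching_Un[OF _ perfect_matching_noncrossing_arcs perfect_matching_linked_arcs]
    by (simp add: Un_absorb2)
qed

lemma uminus_cup_arc:
  assumes "A \<in> cup_arcs n w"
  shows "uminus ` A \<in> cup_arcs n w"
  using assms unfolding cup_arcs_eq
proof
  assume "A \<in> noncrossing_arcs"
  then obtain a b where "A = {a, b}" "(a, b) \<in> matching n w" "(0 < a) = (0 < b)" by blast
  moreover have "a \<noteq> 0" "b \<noteq> 0" using nc_matchingD(1,2)[OF nc \<open>(a, b) \<in> matching n w\<close>] zero_notin_P by auto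
  ultimately have "uminus ` A = {- b, - a}" "(- b, - a) \<in> matching n w" "(0 < - b) = (0 < - a)"
    using mirror_arc by auto
  then show "uminus ` A \<in> noncrossing_arcs \<union> linked_arcs (cross_list n w)" by blast
next
  assume "A \<in> linked_arcs (cross_list n w)"
  then obtain i where "i < length (cross_list n w)" "A = linked_arc (cross_list n w) i"
    unfolding linked_arcs_def by blast
  then have "twin i < length (cross_list n w)" "uminus ` A = linked_arc (cross_list n w) (twin i)"
    using twin_less[OF even_length] uminus_linked_arc by auto
  then show "uminus ` A \<in> noncrossing_arcs \<union> linked_arcs (cross_list n w)"
    unfolding linked_arcs_def by blast
qed

lemma cup_arc_no_antipodes:
  assumes "A \<in> cup_arcs n w" "x \<in> A"
  shows "- x \<notin> A"
  using assms(1) unfolding cup_arcs_eq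
proof
  assume "A \<in> noncrossing_arcs"
  then obtain a b where ab: "A = {a, b}" "(a, b) \<in> matching n w" "(0 < a) = (0 < b)" by blast
  moreover have "a \<noteq> 0" "b \<noteq> 0" using nc_matchingD(1,2)[OF nc ab(2)] zero_notin_P by auto
  ultimately show "- x \<notin> A" using assms(2) by auto
next
  assume "A \<in> linked_arcs (cross_list n w)"
  then obtain i where i: "i < length (cross_list n w)" "A = linked_arc (cross_list n w) i"
    unfolding linked_arcs_def by blast
  have "cross_list n w ! twin i \<noteq> cross_list n w ! i"
    using nth_eq_iff[OF twin_less[OF even_length i(1)] i(1)] twin_neq by simp
  then show "- x \<notin> A"
    using assms(2) i nth_positive[OF i(1)] nth_positive[OF twin_less[OF even_length i(1)]]
    unfolding linked_arc_def by auto
qed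

lemma signed_involution_cup_partner: "signed_involution (points n) (partner (cup_arcs n w))"
  using perfect_matching_cup_arcs uminus_cup_arc cup_arc_no_antipodes
  by (rule signed_involution_partner)

lemma card_crossing_edges_cup:
  assumes Z: "Z \<subseteq> points n" and Z_partner: "\<And>x. x \<in> Z \<Longrightarrow> partner (cup_arcs n w) x \<in> Z"
    and Z_uminus: "\<And>x. x \<in> Z \<Longrightarrow> - x \<in> Z"
  shows "card (crossing_edges (partner (cup_arcs n w)) Z) = 2 * card {L \<in> cup_linked n w. meets Z L}"
proof -
  have "{A \<in> noncrossing_arcs. crosses_zero A} = {}"
    unfolding crosses_zero_def by auto
  moreover have "\<forall>A \<in> linked_arcs (cross_list n w). crosses_zero A"
    using linked_arc_crosses_zero unfolding linked_arcs_def by blast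
  ultimately have "{A \<in> cup_arcs n w. A \<subseteq> Z \<and> crosses_zero A} = {A \<in> linked_arcs (cross_list n w). A \<subseteq> Z}"
    unfolding cup_arcs_eq by blast
  then show ?thesis
    using crossing_edges_partner[OF perfect_matching_cup_arcs zero_notin_P Z Z_partner]
      card_linked_arcs_within[OF Z_uminus] cup_linked_eq by simp
qed

lemma self_intersection_antipodes:
  assumes "L \<in> cup_linked n w" "\<forall>A\<in>L. A \<subseteq> Z"
  obtains p where "p \<in> Z" "- p \<in> Z"
  using antipodes_in_linked_pair assms unfolding cup_linked_eq by blast

end

section \<open>Circle diagrams\<close>

lemma rtrancl_Image_sym:
  assumes "sym R" "p \<in> R\<^sup>* `` {q}"
  shows "R\<^sup>* `` {q} = R\<^sup>* `` {p}"
proof -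
  have qp: "(q, p) \<in> R\<^sup>*" using assms(2) by simp
  then have "(p, q) \<in> R\<^sup>*" using sym_rtrancl[OF assms(1)] unfolding sym_def by blast
  then show ?thesis using qp by (auto intro: rtrancl_trans)
qed

locale circle_diagram = W: cup_diagram n w + W': cup_diagram n w' for n w w'
begin

sublocale alternating_walk "points n" "partner (cup_arcs n w)" "partner (cup_arcs n w')"
  using finite_points W.zero_notin_P W.signed_involution_cup_partner W'.signed_involution_cup_partner
  by unfold_locales

lemma circ_adj_eq:
  "circ_adj n w w' = {(x, y). x \<in> points n \<and> (y = partner (cup_arcs n w) x \<or> y = partner (cup_arcs n w') x)}"
  unfolding circ_adj_def
  using perfect_matching_pair_iff[OF W.perfect_matching_cup_arcs]
    perfect_matching_pair_iff[OF W'.perfect_matching_cup_arcs] by auto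

lemma circle_eq_range_walk:
  assumes "Z \<in> circles n w w'" "p \<in> Z"
  shows "p \<in> points n" "Z = range (walk p)"
proof -
  obtain q where q: "q \<in> points n" "Z = (circ_adj n w w')\<^sup>* `` {q}"
    using assms(1) unfolding circles_def by blast
  have "sym (circ_adj n w w')" unfolding sym_def circ_adj_def by (simp add: insert_commute)
  then have Z: "Z = (circ_adj n w w')\<^sup>* `` {p}" using rtrancl_Image_sym assms(2) q(2) by simp
  have "(q, p) \<in> (circ_adj n w w')\<^sup>*" using assms(2) q(2) by simp
  then show p: "p \<in> points n"
    using q(1) unfolding circ_adj_eq
    by (induction rule: rtrancl_induct)
      (auto simp: perfect_matching_partner(3)[OF W.perfect_matching_cup_arcs]
        perfect_matching_partner(3)[OF W'.perfect_matching_cup_arcs])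
  show "Z = range (walk p)"
    using reachable_eq_range_walk[OF p] unfolding Z circ_adj_eq .
qed

theorem self_intersecting_circle_is_red:
  assumes Z: "Z \<in> circles n w w'" and self_intersecting: "self_intersecting n w w' Z"
  shows "is_red n w w' Z"
proof -
  obtain L where L: "L \<in> cup_linked n w \<union> cup_linked n w'" "\<forall>A\<in>L. A \<subseteq> Z"
    using self_intersecting unfolding self_intersecting_def by blast
  obtain p where p: "p \<in> Z" "- p \<in> Z"
  proof (cases "L \<in> cup_linked n w")
    case True
    then show ?thesis using W.self_intersection_antipodes L(2) that by blast
  next
    case False
    then show ?thesis using W'.self_intersection_antipodes L that by blast
  qed
  have p_in: "p \<in> points n" and Z_walk: "Z = range (walk p)"
    using circle_eq_range_walk[OF Z p(1)] by auto
  interpret antipodal_walk "points n" "partner (cup_arcs n w)" "partner (cup_arcs n w')" p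
    using p_in p(2) Z_walk by unfold_locales auto
  have Z_points: "Z \<subseteq> points n" using Z_walk walk_in[OF p_in] by auto
  have Z_closed: "partner (cup_arcs n w) x \<in> Z" "partner (cup_arcs n w') x \<in> Z" "- x \<in> Z" if "x \<in> Z" for x
    using that range_walk_closed[OF p_in] range_walk_uminus unfolding Z_walk by auto
  obtain m where m: "card (crossing_edges (partner (cup_arcs n w)) Z)
      + card (crossing_edges (partner (cup_arcs n w')) Z) = 2 * m" "odd m"
    using card_crossing_edges_twice_odd unfolding Z_walk by blast
  then have "n_linked_met n w w' Z = m"
    using W.card_crossing_edges_cup[OF Z_points] W'.card_crossing_edges_cup[OF Z_points] Z_closed
    unfolding n_linked_met_def by simp
  then show ?thesis unfolding is_red_def using m(2) by simp
qed

end

theorem corollary3p8: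
  fixes n :: nat and w w' :: "int \<Rightarrow> int" and Z :: "int set"
  assumes "4 \<le> n"
    and "w \<in> minreps n" and "w' \<in> minreps n"
    and "Z \<in> circles n w w'"
    and "self_intersecting n w w' Z"
  shows "is_red n w w' Z"
proof -
  \<comment> \<open>The argument works for every \<open>n\<close>.\<close>
  interpret circle_diagram n w w'
    using assms(2,3) unfolding minreps_def by unfold_locales auto
  show ?thesis using self_intersecting_circle_is_red[OF assms(4,5)] .
qed

end
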